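(* Suppose $N$ is sufficiently large. Define weights $W^0_j=1$ and $$W_j^{r+1}=\left((1-\mu)W_j^r+\frac{\mu}{M}\sum_{k=1}^MW_k^r\right)\beta^{\Phi_j^{r+1}}(1-\beta)^{1-\Phi_j^{r+1}},$$ and $P^r_j=W^r_j/\sum_{j'=1}^MW^r_{j'}$. Let $\delta_Q=c\sqrt{\frac{\ln N}{g(N)}}$ with $c=\frac{4M(2M+1)}{\mu(1-\beta)}\cdot\frac{\exp(\varepsilon/2)+1}{\exp(\varepsilon/2)-1}$, and $\delta_r=5^r\delta_Q$. Then for every option $j$ and round $r$, $P^r_j\overset{1+\delta_r}{\sim}Q^r_j$ holds with probability at least $1-\frac{(10M+3)r}{N^{10}}$, for all realizations of the signals $\Phi^r_j$.
   Context: Notation: for reals $a,b$ and $c\ge0$, $a\overset{c}{\sim}b$ means $\frac1c\le\frac ab\le c$. Setting. $\mathcal G=(\mathcal N,\mathcal E)$ is a connected, non-bipartite undirected graph on agents $\mathcal N=\{1,\dots,N\}$; $\mathcal N_i$ is the neighbor set of $i$, $N_i=|\mathcal N_i|$. There are $M$ options; quality signals $\Phi_j^r\in\{0,1\}$ are i.i.d. Bernoulli$(\eta_j)$ over rounds. $X^r_{i,j}\in\{0,1\}$ indicates agent $i$ adopts option $j$ in round $r$ ($\sum_jX^r_{i,j}\le1$); $D^r_j=\sum_iX^r_{i,j}$, $D^r=\sum_jD^r_j$, popularity $Q^r_j=D^r_j/D^r$, $Q^0_j=1/M$. The function $g:\mathbb N^+\to\mathbb R$ satisfies: for every $\ell>0$,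 $g(N)>\ell\ln N$ and $g(N)<\ell N$ for all sufficiently large $N$. Parameters: $\varepsilon>0$, $\mu\in(0,1)$, $\beta\in(1/2,1)$, $\sigma\ge11$, $h=16\sigma/(1-\beta)$. Metropolis–Hastings random walk: from $i$ move to $i'\in\mathcal N_i$ with probability $\min\{1/N_i,1/N_{i'}\}$, else stay; walk length $L=O(\log N)$ chosen so that the endpoint is at each agent with probability in $[\frac1N-\frac1{N^3},\frac1N+\frac1{N^3}]$. Round $r$: (1) an agent that adopted an option in round $r-1$ perturbs each coordinate of its adoption vector independently (keep with probability $\frac{e^{\varepsilon/2}}{e^{\varepsilon/2}+1}$, flip otherwise); (2) each such agent launches $hg(N)$ independent random-walk tokens of length $L$ carrying its perturbed vector (forwarded via per-agent FIFO queues, up to $hg(N)$ tokens per agent per slot); a token is sampled by the agent where it ends; (3) with $\Lambda^r_{i,j}$ the fraction of $i$'s sampled vectors with $j$-th coordinate $1$, $\widetilde Q^r_{i,j}=\max\{\frac{e^{\varepsilon/2}+1}{e^{\varepsilon/2}-1}\Lambda^r_{i,j}-\frac1{e^{\varepsilon/2}-1},0\}$, $\widehat Q^r_{i,j}=\widetilde Q^r_{i,j}/\sum_{j'}\widetilde Q^r_{i,j'}$, and $i$ selects option $j$ with probability $(1-\mu)\widehat Q^r_{i,j}+\mu/M$; (4) having selected $j^*$, $i$ adopts it with probability $\beta$ if $\Phi^r_{j^*}=1$, $1-\beta$ if $\Phi^r_{j^*}=0$, else adopts nothing. *)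

theory Defs
  imports "HOL-Probability.Probability"
begin

definition nbrs :: "(nat \<Rightarrow> nat \<Rightarrow> bool) \<Rightarrow> nat \<Rightarrow> nat \<Rightarrow> nat set" where
  "nbrs E N i = {k. k < N \<and> E i k}"

definition deg :: "(nat \<Rightarrow> nat \<Rightarrow> bool) \<Rightarrow> nat \<Rightarrow> nat \<Rightarrow> nat" where
  "deg E N i = card (nbrs E N i)"

definition good_graph :: "(nat \<Rightarrow> nat \<Rightarrow> bool) \<Rightarrow> nat \<Rightarrow> bool" where
  "good_graph E N \<longleftrightarrow>
     (\<forall>i k. E i k \<longrightarrow> i < N \<and> k < N) \<and>
     (\<forall>i k. E i k \<longrightarrow> E k i) \<and>
     (\<forall>i. \<not> E i i) \<and>
     (\<forall>i<N. \<forall>k<N. E\<^sup>*\<^sup>* i k) \<and>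
     \<not> (\<exists>S. \<forall>i k. E i k \<longrightarrow> (i \<in> S \<longleftrightarrow> k \<notin> S))"

definition mh_prob :: "(nat \<Rightarrow> nat \<Rightarrow> bool) \<Rightarrow> nat \<Rightarrow> nat \<Rightarrow> nat \<Rightarrow> real" where
  "mh_prob E N i k =
     (if k \<in> nbrs E N i then min (1 / real (deg E N i)) (1 / real (deg E N k))
      else if k = i then 1 - (\<Sum>k'\<in>nbrs E N i. min (1 / real (deg E N i)) (1 / real (deg E N k')))
      else 0)"

definition mh_step :: "(nat \<Rightarrow> nat \<Rightarrow> bool) \<Rightarrow> nat \<Rightarrow> nat \<Rightarrow> nat pmf" where
  "mh_step E N i = embed_pmf (mh_prob E N i)"

fun mh_walk :: "(nat \<Rightarrow> nat \<Rightarrow> bool) \<Rightarrow> nat \<Rightarrow> nat \<Rightarrow> nat \<Rightarrow> nat pmf" where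
  "mh_walk E N 0 i = return_pmf i"
| "mh_walk E N (Suc n) i = bind_pmf (mh_walk E N n i) (mh_step E N)"

definition good_walk_length :: "(nat \<Rightarrow> nat \<Rightarrow> bool) \<Rightarrow> nat \<Rightarrow> nat \<Rightarrow> bool" where
  "good_walk_length E N L \<longleftrightarrow>
     (\<forall>i<N. \<forall>k<N. 1 / real N - 1 / real N ^ 3 \<le> pmf (mh_walk E N L i) k \<and>
                   pmf (mh_walk E N L i) k \<le> 1 / real N + 1 / real N ^ 3)"

text \<open>An adoption state maps each agent to the adopted option (Some j, j < M) or None.\<close>

definition perturb_pmf :: "real \<Rightarrow> nat \<Rightarrow> (nat \<Rightarrow> nat option) \<Rightarrow> nat \<Rightarrow> (nat \<Rightarrow> bool) pmf" where
  "perturb_pmf \<epsilon> M x a =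
     Pi_pmf {..<M} False (\<lambda>j. map_pmf (\<lambda>keep. if keep then x a = Some j else x a \<noteq> Some j)
        (bernoulli_pmf (exp (\<epsilon>/2) / (exp (\<epsilon>/2) + 1))))"

definition Qtilde :: "real \<Rightarrow> real \<Rightarrow> real" where
  "Qtilde \<epsilon> \<Lambda> = max ((exp (\<epsilon>/2) + 1) / (exp (\<epsilon>/2) - 1) * \<Lambda> - 1 / (exp (\<epsilon>/2) - 1)) 0"

text \<open>Convention: if all estimates vanish (e.g. no samples), the normalized estimate is uniform.\<close>
definition Qhat :: "real \<Rightarrow> nat \<Rightarrow> (nat \<Rightarrow> real) \<Rightarrow> nat \<Rightarrow> real" where
  "Qhat \<epsilon> M \<Lambda> j =
     (let s = (\<Sum>j'<M. Qtilde \<epsilon> (\<Lambda> j')) in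
      if s = 0 then 1 / real M else Qtilde \<epsilon> (\<Lambda> j) / s)"

definition select_pmf :: "real \<Rightarrow> real \<Rightarrow> nat \<Rightarrow> (nat \<Rightarrow> real) \<Rightarrow> nat pmf" where
  "select_pmf \<epsilon> \<mu> M \<Lambda> =
     embed_pmf (\<lambda>j. if j < M then (1 - \<mu>) * Qhat \<epsilon> M \<Lambda> j + \<mu> / real M else 0)"

definition adopt_pmf :: "real \<Rightarrow> real \<Rightarrow> real \<Rightarrow> nat \<Rightarrow> (nat \<Rightarrow> bool) \<Rightarrow> (nat \<Rightarrow> real)
    \<Rightarrow> nat option pmf" where
  "adopt_pmf \<epsilon> \<mu> \<beta> M \<Phi>r \<Lambda> =
     bind_pmf (select_pmf \<epsilon> \<mu> M \<Lambda>) (\<lambda>j.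
     bind_pmf (bernoulli_pmf (if \<Phi>r j then \<beta> else 1 - \<beta>)) (\<lambda>a.
     return_pmf (if a then Some j else None)))"

text \<open>K = number of tokens per adopting agent; ends assigns each token its endpoint;
  pv gives each adopting agent's perturbed vector.\<close>
definition Lambda :: "nat set \<Rightarrow> nat \<Rightarrow> (nat \<Rightarrow> nat \<Rightarrow> bool) \<Rightarrow> (nat \<times> nat \<Rightarrow> nat)
    \<Rightarrow> nat \<Rightarrow> nat \<Rightarrow> real" where
  "Lambda A K pv ends i j =
     real (card {t \<in> A \<times> {..<K}. ends t = i \<and> pv (fst t) j})
     / real (card {t \<in> A \<times> {..<K}. ends t = i})"

definition round_step :: "(nat \<Rightarrow> nat \<Rightarrow> bool) \<Rightarrow> nat \<Rightarrow> nat \<Rightarrow> nat \<Rightarrow> nat \<Rightarrow> real \<Rightarrow> real \<Rightarrow> real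
    \<Rightarrow> (nat \<Rightarrow> bool) \<Rightarrow> (nat \<Rightarrow> nat option) \<Rightarrow> (nat \<Rightarrow> nat option) pmf" where
  "round_step E N L K M \<epsilon> \<mu> \<beta> \<Phi>r x =
     (let A = {i. i < N \<and> x i \<noteq> None} in
      bind_pmf (Pi_pmf A (\<lambda>_. False) (perturb_pmf \<epsilon> M x)) (\<lambda>pv.
      bind_pmf (Pi_pmf (A \<times> {..<K}) 0 (\<lambda>t. mh_walk E N L (fst t))) (\<lambda>ends.
      Pi_pmf {..<N} None (\<lambda>i. adopt_pmf \<epsilon> \<mu> \<beta> M \<Phi>r (Lambda A K pv ends i)))))"

text \<open>\<Phi> r j = quality signal of option j in round r (rounds r \<ge> 1).\<close>
fun adoption_proc :: "(nat \<Rightarrow> nat \<Rightarrow> bool) \<Rightarrow> nat \<Rightarrow> nat \<Rightarrow> nat \<Rightarrow> nat \<Rightarrow> real \<Rightarrow> real \<Rightarrow> real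
    \<Rightarrow> (nat \<Rightarrow> nat \<Rightarrow> bool) \<Rightarrow> nat \<Rightarrow> (nat \<Rightarrow> nat option) pmf" where
  "adoption_proc E N L K M \<epsilon> \<mu> \<beta> \<Phi> 0 = return_pmf (\<lambda>_. None)"
| "adoption_proc E N L K M \<epsilon> \<mu> \<beta> \<Phi> (Suc r) =
     bind_pmf (adoption_proc E N L K M \<epsilon> \<mu> \<beta> \<Phi> r) (round_step E N L K M \<epsilon> \<mu> \<beta> (\<Phi> (Suc r)))"

definition popularity :: "nat \<Rightarrow> nat \<Rightarrow> nat \<Rightarrow> (nat \<Rightarrow> nat option) \<Rightarrow> nat \<Rightarrow> real" where
  "popularity N M r x j =
     (if r = 0 then 1 / real M
      else real (card {i. i < N \<and> x i = Some j}) / real (card {i. i < N \<and> x i \<noteq> None}))"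

fun W :: "real \<Rightarrow> real \<Rightarrow> nat \<Rightarrow> (nat \<Rightarrow> nat \<Rightarrow> bool) \<Rightarrow> nat \<Rightarrow> nat \<Rightarrow> real" where
  "W \<mu> \<beta> M \<Phi> 0 j = 1"
| "W \<mu> \<beta> M \<Phi> (Suc r) j =
     ((1 - \<mu>) * W \<mu> \<beta> M \<Phi> r j + \<mu> / real M * (\<Sum>k<M. W \<mu> \<beta> M \<Phi> r k))
     * (if \<Phi> (Suc r) j then \<beta> else 1 - \<beta>)"

definition Pw :: "real \<Rightarrow> real \<Rightarrow> nat \<Rightarrow> (nat \<Rightarrow> nat \<Rightarrow> bool) \<Rightarrow> nat \<Rightarrow> nat \<Rightarrow> real" where
  "Pw \<mu> \<beta> M \<Phi> r j = W \<mu> \<beta> M \<Phi> r j / (\<Sum>k<M. W \<mu> \<beta> M \<Phi> r k)"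

definition approx_within :: "real \<Rightarrow> real \<Rightarrow> real \<Rightarrow> bool" where
  "approx_within c a b \<longleftrightarrow> 1 / c \<le> a / b \<and> a / b \<le> c"

end

theory Submission
  imports Defs
begin

text \<open>
  The weights \<open>P\<^sup>r\<close> follow the expected dynamics of the popularity \<open>Q\<^sup>r\<close>: mix with the
  uniform distribution at rate \<open>\<mu>\<close>, then reweight by the signal. The proof keeps the invariant
  that \<open>l P\<^sup>r \<le> Q\<^sup>r \<le> u P\<^sup>r\<close> with \<open>u \<le> F\<^sup>r l\<close>, and that a constant fraction of the
  agents has adopted. In one round three families of independent indicators are summed: the
  perturbed adoption bits, the endpoints of the random-walk tokens (nearly uniform by the
  mixing assumption) and the final adoption decisions. Multiplicative Chernoff bounds make
  each sum deviate from its mean by at most a factor \<open>1 \<plusminus> O(\<delta>)\<close>, \<open>\<delta> = sqrt (ln N / g N)\<close>,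
  except with probability \<open>O(M N / N\<^sup>1\<^sup>1)\<close>; debiasing turns the sampled frequencies into
  estimates of \<open>Q\<^sup>r\<close>, and the pointwise bounds compose multiplicatively, so the invariant
  survives with \<open>F = 1 + O(\<delta>)\<close>. Finally \<open>F\<^sup>r \<le> 1 + 5\<^sup>r \<delta>\<^sub>Q\<close> and a union bound over the rounds
  gives the failure probability.
\<close>

section \<open>Chernoff bounds for counts under product distributions\<close>

lemma exp_le_quadratic:
  fixes x :: real
  assumes "\<bar>x\<bar> \<le> 1"
  shows "exp x \<le> 1 + x + x\<^sup>2"
proof (cases "0 \<le> x")
  case True
  then show ?thesis using exp_bound assms by simp
next
  case False
  define y where "y = - x"
  have y: "0 < y" "y \<le> 1" using False assms by (auto simp: y_def)
  have "(1 - y + y\<^sup>2) * (1 + y + y\<^sup>2 / 2) = 1 + y\<^sup>2 / 2 + y ^ 3 / 2 + y ^ 4 / 2"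
    by (simp add: field_simps power2_eq_square power3_eq_cube power4_eq_xxxx)
  then have "1 \<le> (1 - y + y\<^sup>2) * (1 + y + y\<^sup>2 / 2)"
    using y by simp
  also have "\<dots> \<le> (1 - y + y\<^sup>2) * exp y"
    using exp_lower_Taylor_quadratic[of y] y by (intro mult_left_mono) auto
  finally have "exp (- y) \<le> 1 - y + y\<^sup>2"
    by (simp add: exp_minus field_simps)
  then show ?thesis by (simp add: y_def)
qed

lemma expectation_if_const:
  "measure_pmf.expectation p (\<lambda>v. if P v then a else (1::real)) = 1 + (a - 1) * measure_pmf.prob p {v. P v}"
proof -
  have "(\<lambda>v. if P v then a else (1::real)) = (\<lambda>v. 1 + (a - 1) * indicator {v. P v} v)"
    by (auto simp: indicator_def)
  moreover have "integrable (measure_pmf p) (indicator {v. P v} :: _ \<Rightarrow> real)"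
    by (rule measure_pmf.integrable_const_bound[where B=1]) (auto simp: indicator_def)
  ultimately show ?thesis by simp
qed

lemma expectation_exp_card_Pi_pmf_le:
  assumes "finite I"
  shows "measure_pmf.expectation (Pi_pmf I d p) (\<lambda>y. exp (l * real (card {i\<in>I. f i (y i)})))
     \<le> exp ((\<Sum>i\<in>I. measure_pmf.prob (p i) {v. f i v}) * (exp l - 1))"
proof -
  let ?q = "\<lambda>i. measure_pmf.prob (p i) {v. f i v}"
  have "(\<lambda>y. exp (l * real (card {i\<in>I. f i (y i)}))) = (\<lambda>y. \<Prod>i\<in>I. if f i (y i) then exp l else 1)"
    using assms by (simp add: prod.If_cases Int_def) (simp add: exp_of_nat_mult[symmetric] mult.commute)
  then have "measure_pmf.expectation (Pi_pmf I d p) (\<lambda>y. exp (l * real (card {i\<in>I. f i (y i)})))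
      = (\<Prod>i\<in>I. measure_pmf.expectation (p i) (\<lambda>v. if f i v then exp l else 1))"
    using assms
    by (simp only:) (rule expectation_prod_Pi_pmf,
        auto intro: measure_pmf.integrable_const_bound[where B="max 1 (exp l)"])
  also have "\<dots> = (\<Prod>i\<in>I. 1 + (exp l - 1) * ?q i)"
    by (simp add: expectation_if_const)
  also have "\<dots> \<le> (\<Prod>i\<in>I. exp (?q i * (exp l - 1)))"
  proof (rule prod_mono)
    fix i
    have q: "0 \<le> ?q i" "?q i \<le> 1" by auto
    have "0 \<le> (1 - ?q i) + exp l * ?q i"
      using q by (intro add_nonneg_nonneg mult_nonneg_nonneg) auto
    then have "0 \<le> 1 + (exp l - 1) * ?q i"
      by (simp add: algebra_simps)
    then show "0 \<le> 1 + (exp l - 1) * ?q i \<and> 1 + (exp l - 1) * ?q i \<le> exp (?q i * (exp l - 1))"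
      using exp_ge_add_one_self[of "?q i * (exp l - 1)"] by (simp add: mult.commute)
  qed
  also have "\<dots> = exp ((\<Sum>i\<in>I. ?q i) * (exp l - 1))"
    using assms by (simp add: exp_sum sum_distrib_right)
  finally show ?thesis .
qed

lemma prob_card_Pi_pmf_tail:
  assumes "finite I" and Q: "Q = (\<Sum>i\<in>I. measure_pmf.prob (p i) {v. f i v})"
    and "Q \<le> m" and "\<bar>l\<bar> \<le> 1"
  shows "measure_pmf.prob (Pi_pmf I d p) {y. l * Q + t \<le> l * real (card {i\<in>I. f i (y i)})}
     \<le> exp (m * l\<^sup>2 - t)"
proof -
  let ?P = "measure_pmf (Pi_pmf I d p)"
  let ?u = "\<lambda>y. exp (l * real (card {i\<in>I. f i (y i)}))"
  have "?u y \<le> exp (real (card I))" for y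
  proof -
    have "card {i\<in>I. f i (y i)} \<le> card I" using assms(1) by (intro card_mono) auto
    moreover have "l * real (card {i\<in>I. f i (y i)}) \<le> 1 * real (card {i\<in>I. f i (y i)})"
      using assms(4) by (intro mult_right_mono) auto
    ultimately show ?thesis by simp
  qed
  then have int: "integrable ?P ?u"
    by (intro measure_pmf.integrable_const_bound[where B="exp (real (card I))"]) auto
  have Q0: "0 \<le> Q" unfolding Q by (intro sum_nonneg) auto
  have "measure_pmf.prob (Pi_pmf I d p) {y. l * Q + t \<le> l * real (card {i\<in>I. f i (y i)})}
      \<le> measure ?P {y \<in> space ?P. exp (l * Q + t) \<le> ?u y}"
    by (intro measure_pmf.finite_measure_mono) auto
  also have "\<dots> \<le> measure_pmf.expectation (Pi_pmf I d p) ?u / exp (l * Q + t)"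
    by (rule integral_Markov_inequality_measure[OF int]) auto
  also have "\<dots> \<le> exp (Q * (exp l - 1)) / exp (l * Q + t)"
    unfolding Q by (intro divide_right_mono expectation_exp_card_Pi_pmf_le assms(1)) auto
  also have "\<dots> = exp (Q * (exp l - 1 - l) - t)"
    by (simp add: exp_diff[symmetric] algebra_simps)
  also have "\<dots> \<le> exp (m * l\<^sup>2 - t)"
  proof -
    have "0 \<le> exp l - 1 - l" using exp_ge_add_one_self[of l] by linarith
    then have "Q * (exp l - 1 - l) \<le> m * (exp l - 1 - l)"
      using assms(3) by (intro mult_right_mono)
    also have "\<dots> \<le> m * l\<^sup>2"
      using exp_le_quadratic[OF assms(4)] Q0 assms(3) by (intro mult_left_mono) auto
    finally show ?thesis by simp
  qed
  finally show ?thesis .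
qed

lemma chernoff_card_Pi_pmf:
  assumes "finite I" and Q: "Q = (\<Sum>i\<in>I. measure_pmf.prob (p i) {v. f i v})"
    and "Q \<le> m" and "0 \<le> \<theta>" "\<theta> \<le> 1"
  shows "measure_pmf.prob (Pi_pmf I d p) {y. \<theta> * m < \<bar>real (card {i\<in>I. f i (y i)}) - Q\<bar>}
     \<le> 2 * exp (- (\<theta>\<^sup>2 * m / 4))"
proof -
  let ?c = "\<lambda>y. real (card {i\<in>I. f i (y i)})"
  let ?tail = "\<lambda>l. {y. l * Q + \<theta>\<^sup>2 * m / 2 \<le> l * ?c y}"
  have key: "\<theta>\<^sup>2 * m / 2 \<le> \<theta> / 2 * d" if "\<theta> * m < d" for d
    using mult_left_mono[of "\<theta> * m" d "\<theta> / 2"] that assms(4) by (simp add: power2_eq_square)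
  have tails: "{y. \<theta> * m < \<bar>?c y - Q\<bar>} \<subseteq> ?tail (\<theta> / 2) \<union> ?tail (- \<theta> / 2)"
  proof
    fix y assume "y \<in> {y. \<theta> * m < \<bar>?c y - Q\<bar>}"
    then consider "\<theta> * m < ?c y - Q" | "\<theta> * m < Q - ?c y" by (auto simp: abs_if split: if_splits)
    then show "y \<in> ?tail (\<theta> / 2) \<union> ?tail (- \<theta> / 2)"
      by cases (drule key, simp add: algebra_simps)+
  qed
  have "measure_pmf.prob (Pi_pmf I d p) {y. \<theta> * m < \<bar>?c y - Q\<bar>}
      \<le> measure_pmf.prob (Pi_pmf I d p) (?tail (\<theta> / 2) \<union> ?tail (- \<theta> / 2))"
    using tails by (rule measure_pmf.finite_measure_mono) simp
  also have "\<dots> \<le> measure_pmf.prob (Pi_pmf I d p) (?tail (\<theta> / 2))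
        + measure_pmf.prob (Pi_pmf I d p) (?tail (- \<theta> / 2))"
    by (rule measure_Un_le) auto
  also have "\<dots> \<le> exp (m * (\<theta> / 2)\<^sup>2 - \<theta>\<^sup>2 * m / 2) + exp (m * (- \<theta> / 2)\<^sup>2 - \<theta>\<^sup>2 * m / 2)"
    using assms by (intro add_mono prob_card_Pi_pmf_tail[OF assms(1,2,3)]) auto
  also have "\<dots> = 2 * exp (- (\<theta>\<^sup>2 * m / 4))"
    by (simp add: power2_eq_square algebra_simps)
  finally show ?thesis .
qed

lemma prob_bind_pmf_le:
  assumes "measure_pmf.prob p A \<le> a" "0 \<le> b"
    and "\<And>x. x \<in> set_pmf p \<Longrightarrow> x \<notin> A \<Longrightarrow> measure_pmf.prob (f x) B \<le> b"
  shows "measure_pmf.prob (bind_pmf p f) B \<le> a + b"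
proof -
  have "ennreal (measure_pmf.prob (bind_pmf p f) B) = (\<integral>\<^sup>+x. emeasure (f x) B \<partial>p)"
    by (simp add: measure_pmf.emeasure_eq_measure[symmetric])
  also have "\<dots> \<le> (\<integral>\<^sup>+x. ennreal (indicator A x + b) \<partial>p)"
  proof (intro nn_integral_mono_AE AE_pmfI)
    fix x assume "x \<in> set_pmf p"
    then have "measure_pmf.prob (f x) B \<le> indicator A x + b"
      using assms by (cases "x \<in> A") (auto intro: order.trans[OF measure_pmf.prob_le_1])
    then show "emeasure (f x) B \<le> ennreal (indicator A x + b)"
      by (simp add: measure_pmf.emeasure_eq_measure ennreal_leI)
  qed
  also have "\<dots> = ennreal (measure_pmf.expectation p (\<lambda>x. indicator A x + b))"
    using assms(2)
    by (intro nn_integral_eq_integral measure_pmf.integrable_const_bound[where B="1 + b"]) auto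
  also have "measure_pmf.expectation p (\<lambda>x. indicator A x + b) = measure_pmf.prob p A + b"
    by (subst Bochner_Integration.integral_add)
      (auto intro: measure_pmf.integrable_const_bound[where B=1])
  finally show ?thesis
    using assms(1,2) by (subst (asm) ennreal_le_iff) auto
qed

lemma prob_le_card_mult:
  fixes c :: real
  assumes "finite I"
    and "\<And>y. y \<in> set_pmf p \<Longrightarrow> y \<in> A \<Longrightarrow> \<exists>i\<in>I. y \<in> B i"
    and "\<And>i. i \<in> I \<Longrightarrow> measure_pmf.prob p (B i) \<le> c"
  shows "measure_pmf.prob p A \<le> card I * c"
proof -
  have "measure_pmf.prob p A \<le> measure_pmf.prob p (\<Union>i\<in>I. B i)"
    using assms(2) by (intro measure_pmf.finite_measure_mono_AE AE_pmfI) auto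
  also have "\<dots> \<le> (\<Sum>i\<in>I. measure_pmf.prob p (B i))"
    using assms(1) by (rule measure_pmf.finite_measure_subadditive_finite) auto
  also have "\<dots> \<le> (\<Sum>i\<in>I. c)"
    using assms(3) by (rule sum_mono)
  finally show ?thesis by simp
qed

lemma prob_ge_1_minus_of_compl_le:
  assumes "\<And>x. Q x \<Longrightarrow> P x" "measure_pmf.prob p {x. \<not> Q x} \<le> a"
  shows "1 - a \<le> measure_pmf.prob p {x. P x}"
proof -
  have "measure_pmf.prob p {x. \<not> Q x} = 1 - measure_pmf.prob p {x. Q x}"
    using measure_pmf.prob_compl[of "{x. Q x}" p] by (simp add: Compl_eq_Diff_UNIV[symmetric] Collect_neg_eq)
  moreover have "measure_pmf.prob p {x. Q x} \<le> measure_pmf.prob p {x. P x}"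
    using assms(1) by (intro measure_pmf.finite_measure_mono) auto
  ultimately show ?thesis using assms(2) by linarith
qed

lemma exp_minus_le_inverse_power:
  fixes y :: real
  assumes "0 < n" "real k * ln (real n) \<le> y"
  shows "exp (- y) \<le> 1 / real n ^ k"
proof -
  have "exp (- y) \<le> exp (- (real k * ln (real n)))" using assms(2) by simp
  also have "\<dots> = 1 / real n ^ k"
    using assms(1) by (simp add: exp_minus exp_of_nat_mult inverse_eq_divide)
  finally show ?thesis .
qed

lemma one_plus_power_le:
  fixes x :: real
  assumes "0 \<le> x" "x \<le> 1"
  shows "(1 + x) ^ r \<le> 1 + 5 ^ r * x / 5"
proof (induction r)
  case 0
  then show ?case using assms by simp
next
  case (Suc r)
  show ?case
  proof (cases "r = 0")
    case True
    then show ?thesis by simp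
  next
    case False
    then have "(5::real) \<le> 5 ^ r" using power_increasing[of 1 r "5::real"] by simp
    have "(1 + x) ^ Suc r \<le> (1 + x) * (1 + 5 ^ r * x / 5)"
      using Suc.IH assms by (simp add: mult_left_mono)
    also have "\<dots> = 1 + x + 5 ^ r * x / 5 + 5 ^ r * (x * x) / 5" by (simp add: algebra_simps)
    also have "\<dots> \<le> 1 + x + 5 ^ r * x / 5 + 5 ^ r * x / 5"
      using assms by (simp add: mult_left_le)
    also have "\<dots> \<le> 1 + 5 ^ r * x"
      using mult_right_mono[OF \<open>5 \<le> 5 ^ r\<close> assms(1)] zero_le_power[of 5 r] assms(1)
        mult_nonneg_nonneg[of "5 ^ r" x]
      by linarith
    also have "\<dots> = 1 + 5 ^ Suc r * x / 5" by simp
    finally show ?thesis .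
  qed
qed

lemma growth_factor_le:
  fixes u v :: real
  assumes "0 \<le> u" "u \<le> 1/4" "0 \<le> v" "v \<le> 1/4"
  shows "(1 + u) * (1 + v) / ((1 - u) * (1 - v)) \<le> 1 + 4 * (u + v)"
proof -
  have "3/4 * (3/4) \<le> (1 - u) * (1 - v)" using assms by (intro mult_mono) auto
  then have den: "1/2 \<le> (1 - u) * (1 - v)" by simp
  have "(1 + u) * (1 + v) / ((1 - u) * (1 - v)) = 1 + 2 * (u + v) / ((1 - u) * (1 - v))"
    using den by (simp add: field_simps)
  also have "2 * (u + v) / ((1 - u) * (1 - v)) \<le> 2 * (u + v) / (1/2)"
    using den assms by (intro divide_left_mono) auto
  finally show ?thesis by simp
qed

lemma abs_max_0_diff_le:
  fixes k a c q l t :: real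
  assumes "0 < k" "\<bar>l - a\<bar> \<le> t" "k * a - c = q" "0 \<le> q"
  shows "\<bar>max (k * l - c) 0 - q\<bar> \<le> k * t"
proof -
  have "k * l - c - q = k * (l - a)" using assms(3) by (simp add: algebra_simps)
  moreover have "\<bar>k * (l - a)\<bar> \<le> k * t" using assms(1,2) by (simp add: abs_mult)
  ultimately show ?thesis using assms(4) by (auto simp: max_def abs_le_iff)
qed

lemma abs_divide_diff_le:
  fixes m n \<nu> q e e' :: real
  assumes "0 < \<nu>" "0 \<le> q" "q \<le> 1" "\<bar>n - \<nu>\<bar> \<le> e * \<nu>" "\<bar>m - q * \<nu>\<bar> \<le> e' * \<nu>" "e \<le> 1/2"
  shows "\<bar>m / n - q\<bar> \<le> 2 * (e + e')"
proof -
  have "e * \<nu> \<le> 1/2 * \<nu>" using mult_right_mono[OF assms(6)] assms(1) by simp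
  then have "\<nu> / 2 \<le> n" using assms(4) by (simp add: abs_le_iff)
  then have n: "0 < n" using assms(1) by linarith
  have "\<bar>q * (\<nu> - n)\<bar> \<le> 1 * (e * \<nu>)"
    unfolding abs_mult using assms(2-4) by (intro mult_mono) (auto simp: abs_minus_commute)
  then have "\<bar>m - q * n\<bar> \<le> (e + e') * \<nu>"
    using assms(5) by (auto simp: abs_le_iff algebra_simps)
  then have "\<bar>m - q * n\<bar> / n \<le> (e + e') * \<nu> / (\<nu> / 2)"
    using n \<open>\<nu> / 2 \<le> n\<close> assms(1) by (intro frac_le) auto
  moreover have "\<bar>m / n - q\<bar> = \<bar>m - q * n\<bar> / n"
    using n by (simp add: field_simps)
  ultimately show ?thesis using assms(1) by simp
qed

lemma abs_diff_gt_of_close: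
  fixes a b c e q :: real
  assumes "\<bar>q - b\<bar> \<le> e" "a + e < \<bar>c - b\<bar>"
  shows "a < \<bar>c - q\<bar>"
  using assms by linarith

lemma sum_if_eq_card:
  fixes c d :: real
  assumes "finite A"
  shows "(\<Sum>a\<in>A. if P a then c else d) = c * card {a\<in>A. P a} + d * (real (card A) - card {a\<in>A. P a})"
proof -
  have "card {a\<in>A. \<not> P a} = card A - card {a\<in>A. P a}"
    using assms by (subst card_Diff_subset[symmetric]) (auto intro: arg_cong[where f=card])
  moreover have "card {a\<in>A. P a} \<le> card A" using assms by (intro card_mono) auto
  ultimately show ?thesis
    using assms by (simp add: sum.If_cases Int_def mult.commute of_nat_diff)
qed

lemma ln_ge_1: "3 \<le> N \<Longrightarrow> 1 \<le> ln (real N)"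
  using exp_le ln_ge_iff[of "real N" 1] by simp

definition sandwiched :: "nat \<Rightarrow> real \<Rightarrow> real \<Rightarrow> (nat \<Rightarrow> real) \<Rightarrow> (nat \<Rightarrow> real) \<Rightarrow> bool" where
  "sandwiched M l u P Q \<longleftrightarrow> (\<forall>j<M. l * P j \<le> Q j \<and> Q j \<le> u * P j)"

lemma sandwiched_trans:
  assumes "sandwiched M l u P Q" "sandwiched M l' u' Q R" "0 \<le> l'" "0 \<le> u'"
  shows "sandwiched M (l' * l) (u' * u) P R"
  unfolding sandwiched_def
proof (intro allI impI conjI)
  fix j assume "j < M"
  then have "l * P j \<le> Q j" "Q j \<le> u * P j" "l' * Q j \<le> R j" "R j \<le> u' * Q j"
    using assms(1,2) by (auto simp: sandwiched_def)
  moreover have "l' * (l * P j) \<le> l' * Q j" "u' * Q j \<le> u' * (u * P j)"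
    using calculation(1,2) assms(3,4) by (simp_all add: mult_left_mono)
  ultimately show "l' * l * P j \<le> R j" "R j \<le> u' * u * P j"
    by (simp_all add: mult.assoc)
qed

lemma sandwiched_mix:
  assumes "sandwiched M l u P Q" "l \<le> 1" "1 \<le> u" "0 \<le> a" "0 \<le> m"
  shows "sandwiched M l u (\<lambda>j. a * P j + m) (\<lambda>j. a * Q j + m)"
  unfolding sandwiched_def
proof (intro allI impI conjI)
  fix j assume "j < M"
  then have "a * (l * P j) \<le> a * Q j" "a * Q j \<le> a * (u * P j)"
    using assms(1,4) by (auto simp: sandwiched_def intro: mult_left_mono)
  moreover have "l * m \<le> m" "m \<le> u * m"
    using assms(2,3,5) mult_right_mono by fastforce+
  ultimately show "l * (a * P j + m) \<le> a * Q j + m" "a * Q j + m \<le> u * (a * P j + m)"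
    by (simp_all add: algebra_simps)
qed

lemma sandwiched_sum:
  assumes "finite I" "\<And>i. i \<in> I \<Longrightarrow> sandwiched M l u P (Q i)"
  shows "sandwiched M (l * card I) (u * card I) P (\<lambda>j. \<Sum>i\<in>I. Q i j)"
  unfolding sandwiched_def
proof (intro allI impI conjI)
  fix j assume "j < M"
  then have lo: "l * P j \<le> Q i j" and up: "Q i j \<le> u * P j" if "i \<in> I" for i
    using assms(2)[OF that] by (auto simp: sandwiched_def)
  have "(\<Sum>i\<in>I. l * P j) \<le> (\<Sum>i\<in>I. Q i j)" "(\<Sum>i\<in>I. Q i j) \<le> (\<Sum>i\<in>I. u * P j)"
    by (rule sum_mono, erule lo, rule sum_mono, erule up)
  then show "l * card I * P j \<le> (\<Sum>i\<in>I. Q i j)" "(\<Sum>i\<in>I. Q i j) \<le> u * card I * P j"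
    by (simp_all add: mult_ac)
qed

lemma sandwiched_mult:
  assumes "sandwiched M l u P Q" "\<And>j. j < M \<Longrightarrow> 0 \<le> b j"
  shows "sandwiched M l u (\<lambda>j. P j * b j) (\<lambda>j. Q j * b j)"
  unfolding sandwiched_def
proof (intro allI impI conjI)
  fix j assume "j < M"
  then have "l * P j \<le> Q j" "Q j \<le> u * P j" "0 \<le> b j"
    using assms by (auto simp: sandwiched_def)
  then have "l * P j * b j \<le> Q j * b j" "Q j * b j \<le> u * P j * b j"
    by (simp_all add: mult_right_mono)
  then show "l * (P j * b j) \<le> Q j * b j" "Q j * b j \<le> u * (P j * b j)"
    by (simp_all add: mult.assoc)
qed

lemma sandwiched_divide:
  assumes "sandwiched M l u P Q" "0 < c" "0 < d"
  shows "sandwiched M (l * c / d) (u * c / d) (\<lambda>j. P j / c) (\<lambda>j. Q j / d)"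
  unfolding sandwiched_def
proof (intro allI impI conjI)
  fix j assume "j < M"
  then have "l * P j / d \<le> Q j / d" "Q j / d \<le> u * P j / d"
    using assms by (auto simp: sandwiched_def divide_right_mono)
  then show "l * c / d * (P j / c) \<le> Q j / d" "Q j / d \<le> u * c / d * (P j / c)"
    using assms(2) by simp_all
qed

lemma sandwiched_of_abs_diff_le:
  assumes "\<And>j. j < M \<Longrightarrow> \<bar>Q j - P j\<bar> \<le> e * P j"
  shows "sandwiched M (1 - e) (1 + e) P Q"
  using assms unfolding sandwiched_def by (fastforce simp: abs_le_iff algebra_simps)

lemma sandwiched_le_1_le:
  assumes "sandwiched M l u P Q" "(\<Sum>j<M. P j) = 1" "(\<Sum>j<M. Q j) = 1"
  shows "l \<le> 1" "1 \<le> u"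
proof -
  have "(\<Sum>j<M. l * P j) \<le> (\<Sum>j<M. Q j)" "(\<Sum>j<M. Q j) \<le> (\<Sum>j<M. u * P j)"
    using assms(1) by (auto simp: sandwiched_def intro: sum_mono)
  then show "l \<le> 1" "1 \<le> u"
    using assms(2,3) by (simp_all add: sum_distrib_left[symmetric])
qed

lemma approx_within_of_sandwiched:
  assumes "sandwiched M l u P Q" "0 < l" "l \<le> 1" "1 \<le> u" "u \<le> c * l" "j < M" "0 < P j"
  shows "approx_within c (P j) (Q j)"
proof -
  have PQ: "l * P j \<le> Q j" "Q j \<le> u * P j" using assms(1,6) by (auto simp: sandwiched_def)
  have Q: "0 < Q j" using PQ(1) assms(2,7) by (meson mult_pos_pos order_less_le_trans)
  have "1 \<le> c * l" using assms(4,5) by linarith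
  then have c: "1 / l \<le> c" using assms(2) by (simp add: field_simps)
  have "1 \<le> 1 / l" using assms(2,3) by simp
  then have "1 \<le> c" using c by linarith
  then have "u \<le> c" using assms(5) mult_left_le[OF assms(3), of c] by linarith
  then have "Q j \<le> c * P j"
    using PQ(2) mult_right_mono[OF \<open>u \<le> c\<close> less_imp_le[OF assms(7)]] by linarith
  then have "Q j / P j \<le> c" using assms(7) by (simp add: field_simps)
  then have "1 / c \<le> P j / Q j" using Q assms(7) \<open>1 \<le> c\<close> by (simp add: field_simps)
  moreover have "P j / Q j \<le> 1 / l" using PQ(1) assms(2,7) Q by (simp add: field_simps)
  ultimately show ?thesis using c unfolding approx_within_def by simp
qed

definition keep_prob :: "real \<Rightarrow> real" where
  "keep_prob \<epsilon> = exp (\<epsilon>/2) / (exp (\<epsilon>/2) + 1)"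

definition debias_scale :: "real \<Rightarrow> real" where
  "debias_scale \<epsilon> = (exp (\<epsilon>/2) + 1) / (exp (\<epsilon>/2) - 1)"

lemma debias_scale_ge_1:
  assumes "0 < \<epsilon>"
  shows "1 \<le> debias_scale \<epsilon>"
  using assms by (simp add: debias_scale_def le_divide_eq)

lemma debias_keep_prob:
  assumes "0 < \<epsilon>"
  shows "debias_scale \<epsilon> * (keep_prob \<epsilon> * q + (1 - keep_prob \<epsilon>) * (1 - q)) - 1 / (exp (\<epsilon>/2) - 1) = q"
proof -
  define e where "e = exp (\<epsilon>/2)"
  have e: "1 < e" using assms by (simp add: e_def)
  have scaled: "(e + 1) / (e - 1) * (e / (e + 1) * q + (1 - e / (e + 1)) * (1 - q)) = (e * q + 1 - q) / (e - 1)"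
    using e by (simp add: divide_simps)
  have "(e * q + 1 - q) / (e - 1) - 1 / (e - 1) = q"
    using e by (simp add: divide_simps) (simp add: algebra_simps)
  then show ?thesis
    unfolding debias_scale_def keep_prob_def e_def[symmetric] scaled .
qed

lemma Qtilde_eq_max: "Qtilde \<epsilon> \<Lambda> = max (debias_scale \<epsilon> * \<Lambda> - 1 / (exp (\<epsilon>/2) - 1)) 0"
  by (simp add: Qtilde_def debias_scale_def)

lemma Qhat_nonneg: "0 \<le> Qhat \<epsilon> M \<Lambda> j"
  by (auto simp: Qhat_def Let_def Qtilde_def intro!: divide_nonneg_nonneg sum_nonneg)

lemma sum_Qhat:
  assumes "1 \<le> M"
  shows "(\<Sum>j<M. Qhat \<epsilon> M \<Lambda> j) = 1"
  using assms by (cases "(\<Sum>j'<M. Qtilde \<epsilon> (\<Lambda> j')) = 0")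
    (simp_all add: Qhat_def sum_divide_distrib[symmetric])

lemma Qhat_zero:
  assumes "0 < \<epsilon>"
  shows "Qhat \<epsilon> M (\<lambda>_. 0) j = 1 / M"
  using assms by (simp add: Qhat_def Qtilde_def)

lemma abs_Qhat_diff_le:
  assumes "0 < \<epsilon>" and Q: "\<forall>j<M. 0 \<le> Q j" "(\<Sum>j<M. Q j) = 1"
    and est: "\<forall>j<M. \<bar>\<Lambda> j - a j\<bar> \<le> t"
    and unbiased: "\<forall>j<M. debias_scale \<epsilon> * a j - 1 / (exp (\<epsilon>/2) - 1) = Q j"
    and small: "M * (debias_scale \<epsilon> * t) \<le> 1/2" and "j < M"
  shows "\<bar>Qhat \<epsilon> M \<Lambda> j - Q j\<bar> \<le> 2 * (real M + 1) * (debias_scale \<epsilon> * t)"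
proof -
  define k where "k = debias_scale \<epsilon> * t"
  define S where "S = (\<Sum>j<M. Qtilde \<epsilon> (\<Lambda> j))"
  have err: "\<bar>Qtilde \<epsilon> (\<Lambda> i) - Q i\<bar> \<le> k" if "i < M" for i
    unfolding Qtilde_eq_max k_def
    using abs_max_0_diff_le debias_scale_ge_1[OF assms(1)] est unbiased Q(1) that by auto
  have "\<bar>S - 1\<bar> = \<bar>\<Sum>i<M. Qtilde \<epsilon> (\<Lambda> i) - Q i\<bar>"
    by (simp add: S_def sum_subtractf Q(2))
  also have "\<dots> \<le> (\<Sum>i<M. k)"
    using err by (intro order.trans[OF sum_abs] sum_mono) auto
  finally have S: "\<bar>S - 1\<bar> \<le> M * k * 1" by simp
  have "Q j \<le> 1"
    using member_le_sum[of j "{..<M}" Q] Q \<open>j < M\<close> by auto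
  then have "\<bar>Qtilde \<epsilon> (\<Lambda> j) / S - Q j\<bar> \<le> 2 * (M * k + k)"
    using S err[OF \<open>j < M\<close>] small Q(1) \<open>j < M\<close>
    by (intro abs_divide_diff_le[where \<nu>=1]) (auto simp: k_def)
  moreover have "S \<noteq> 0" using S small by (auto simp: k_def abs_le_iff)
  ultimately show ?thesis by (simp add: Qhat_def S_def k_def algebra_simps)
qed

lemma pmf_select_pmf:
  assumes "1 \<le> M" "0 \<le> \<mu>" "\<mu> \<le> 1"
  shows "pmf (select_pmf \<epsilon> \<mu> M \<Lambda>) j = (if j < M then (1 - \<mu>) * Qhat \<epsilon> M \<Lambda> j + \<mu> / M else 0)"
  unfolding select_pmf_def
proof (rule pmf_embed_pmf)
  show nonneg: "0 \<le> (if j < M then (1 - \<mu>) * Qhat \<epsilon> M \<Lambda> j + \<mu> / M else 0)" for j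
    using assms Qhat_nonneg by auto
  have "(\<Sum>j<M. ennreal ((1 - \<mu>) * Qhat \<epsilon> M \<Lambda> j + \<mu> / M))
      = ennreal (\<Sum>j<M. (1 - \<mu>) * Qhat \<epsilon> M \<Lambda> j + \<mu> / M)"
    using nonneg by (intro sum_ennreal) (metis lessThan_iff)
  then have "(\<integral>\<^sup>+j. ennreal (if j < M then (1 - \<mu>) * Qhat \<epsilon> M \<Lambda> j + \<mu> / M else 0) \<partial>count_space UNIV)
      = ennreal (\<Sum>j<M. (1 - \<mu>) * Qhat \<epsilon> M \<Lambda> j + \<mu> / M)"
    by (subst nn_integral_count_space'[where A="{..<M}"]) auto
  also have "(\<Sum>j<M. (1 - \<mu>) * Qhat \<epsilon> M \<Lambda> j + \<mu> / M) = 1"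
    using assms by (simp add: sum.distrib sum_distrib_left[symmetric] sum_Qhat)
  finally show "(\<integral>\<^sup>+j. ennreal (if j < M then (1 - \<mu>) * Qhat \<epsilon> M \<Lambda> j + \<mu> / M else 0) \<partial>count_space UNIV) = 1"
    by simp
qed

lemma set_pmf_adopt_pmf:
  assumes "1 \<le> M" "0 \<le> \<mu>" "\<mu> \<le> 1"
  shows "set_pmf (adopt_pmf \<epsilon> \<mu> \<beta> M \<Phi>r \<Lambda>) \<subseteq> {None} \<union> Some ` {..<M}"
proof -
  have sel: "set_pmf (select_pmf \<epsilon> \<mu> M \<Lambda>) \<subseteq> {..<M}"
    using pmf_select_pmf[OF assms] by (auto simp: set_pmf_eq split: if_splits)
  show ?thesis by (auto simp: adopt_pmf_def) (use sel in blast)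
qed

lemma set_pmf_Pi_adopt_pmf:
  fixes N :: nat
  assumes "1 \<le> M" "0 \<le> \<mu>" "\<mu> \<le> 1" "y \<in> set_pmf (Pi_pmf {..<N} None (\<lambda>i. adopt_pmf \<epsilon> \<mu> \<beta> M \<Phi>r (\<Lambda>s i)))"
  shows "\<forall>i j. y i = Some j \<longrightarrow> j < M"
proof (intro allI impI)
  fix i j assume "y i = Some j"
  moreover have "y \<in> PiE_dflt {..<N} None (set_pmf \<circ> (\<lambda>i. adopt_pmf \<epsilon> \<mu> \<beta> M \<Phi>r (\<Lambda>s i)))"
    using assms(4) set_Pi_pmf_subset'[of "{..<N}" None] by auto
  ultimately have "y i \<in> set_pmf (adopt_pmf \<epsilon> \<mu> \<beta> M \<Phi>r (\<Lambda>s i))"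
    by (cases "i < N") (auto simp: PiE_dflt_def)
  then show "j < M"
    using set_pmf_adopt_pmf[OF assms(1-3)] \<open>y i = Some j\<close> by fastforce
qed

lemma prob_adopt_pmf_Some:
  assumes "1 \<le> M" "0 \<le> \<mu>" "\<mu> \<le> 1" "0 \<le> \<beta>" "\<beta> \<le> 1" "j < M"
  shows "measure_pmf.prob (adopt_pmf \<epsilon> \<mu> \<beta> M \<Phi>r \<Lambda>) {v. v = Some j}
     = ((1 - \<mu>) * Qhat \<epsilon> M \<Lambda> j + \<mu> / M) * (if \<Phi>r j then \<beta> else 1 - \<beta>)"
proof -
  let ?b = "if \<Phi>r j then \<beta> else 1 - \<beta>"
  have "measure_pmf.prob (adopt_pmf \<epsilon> \<mu> \<beta> M \<Phi>r \<Lambda>) {v. v = Some j} = pmf (adopt_pmf \<epsilon> \<mu> \<beta> M \<Phi>r \<Lambda>) (Some j)"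
    by (simp add: measure_pmf_single)
  also have "\<dots> = measure_pmf.expectation (select_pmf \<epsilon> \<mu> M \<Lambda>) (\<lambda>k. ?b * indicator {j} k)"
    unfolding adopt_pmf_def pmf_bind
    using assms by (intro Bochner_Integration.integral_cong) (auto simp: pmf_bind[symmetric] indicator_def)
  also have "\<dots> = pmf (select_pmf \<epsilon> \<mu> M \<Lambda>) j * ?b"
    by (simp add: measure_pmf_single)
  finally show ?thesis using pmf_select_pmf[OF assms(1-3)] assms(6) by simp
qed

lemma prob_perturb_pmf:
  assumes "j < M"
  shows "measure_pmf.prob (perturb_pmf \<epsilon> M x a) {v. v j}
    = (if x a = Some j then keep_prob \<epsilon> else 1 - keep_prob \<epsilon>)"
proof -
  have p: "0 \<le> keep_prob \<epsilon>" "keep_prob \<epsilon> \<le> 1" by (auto simp: keep_prob_def add_pos_pos)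
  have "measure_pmf.prob (perturb_pmf \<epsilon> M x a) {v. v j}
      = measure_pmf.prob (map_pmf (\<lambda>v. v j) (perturb_pmf \<epsilon> M x a)) {True}"
    by (simp add: vimage_def)
  also have "map_pmf (\<lambda>v. v j) (perturb_pmf \<epsilon> M x a)
      = map_pmf (\<lambda>keep. if keep then x a = Some j else x a \<noteq> Some j) (bernoulli_pmf (keep_prob \<epsilon>))"
    unfolding perturb_pmf_def keep_prob_def using assms by (subst Pi_pmf_component) auto
  also have "measure_pmf.prob \<dots> {True}
      = measure_pmf.prob (bernoulli_pmf (keep_prob \<epsilon>)) {if x a = Some j then True else False}"
    unfolding measure_map_pmf by (rule arg_cong[where f="measure_pmf.prob _"]) auto
  finally show ?thesis
    using p by (simp add: measure_pmf_single)
qed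

definition adopters :: "nat \<Rightarrow> (nat \<Rightarrow> nat option) \<Rightarrow> nat set" where
  "adopters N x = {i. i < N \<and> x i \<noteq> None}"

lemma finite_adopters: "finite (adopters N x)"
  by (simp add: adopters_def)

lemma card_adopters_eq_sum:
  assumes "\<forall>i j. x i = Some j \<longrightarrow> j < M"
  shows "card (adopters N x) = (\<Sum>j<M. card {i. i < N \<and> x i = Some j})"
proof -
  have "adopters N x = (\<Union>j<M. {i. i < N \<and> x i = Some j})"
    using assms by (auto simp: adopters_def)
  moreover have "card (\<Union>j<M. {i. i < N \<and> x i = Some j}) = (\<Sum>j<M. card {i. i < N \<and> x i = Some j})"
    by (rule card_UN_disjoint) auto
  ultimately show ?thesis by simp
qed

lemma popularity_nonneg: "0 \<le> popularity N M r x j"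
  by (simp add: popularity_def)

lemma sum_popularity:
  assumes "\<forall>i j. x i = Some j \<longrightarrow> j < M" "1 \<le> M" "0 < r \<Longrightarrow> 0 < card (adopters N x)"
  shows "(\<Sum>j<M. popularity N M r x j) = 1"
proof (cases "r = 0")
  case True
  then show ?thesis using assms(2) by (simp add: popularity_def)
next
  case False
  have "popularity N M r x j = real (card {i. i < N \<and> x i = Some j}) / card (adopters N x)" for j
    using False by (simp add: popularity_def adopters_def)
  moreover have "(\<Sum>j<M. real (card {i. i < N \<and> x i = Some j})) = real (card (adopters N x))"
    using card_adopters_eq_sum[OF assms(1)] by simp
  ultimately show ?thesis
    using False assms(3) by (simp add: sum_divide_distrib[symmetric])
qed

lemma W_pos:
  assumes "0 < \<mu>" "\<mu> < 1" "0 < \<beta>" "\<beta> < 1" "1 \<le> M"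
  shows "0 < W \<mu> \<beta> M \<Phi> r j"
proof (induction r arbitrary: j)
  case 0
  then show ?case by simp
next
  case (Suc r)
  have "0 \<le> (\<Sum>k<M. W \<mu> \<beta> M \<Phi> r k)" using Suc by (intro sum_nonneg) (auto intro: less_imp_le)
  then have "0 < (1 - \<mu>) * W \<mu> \<beta> M \<Phi> r j + \<mu> / M * (\<Sum>k<M. W \<mu> \<beta> M \<Phi> r k)"
    using Suc[of j] assms by (intro add_pos_nonneg) auto
  then show ?case using assms by simp
qed

lemma sum_W_pos:
  assumes "0 < \<mu>" "\<mu> < 1" "0 < \<beta>" "\<beta> < 1" "1 \<le> M"
  shows "0 < (\<Sum>k<M. W \<mu> \<beta> M \<Phi> r k)"
  using W_pos[OF assms] assms(5) by (intro sum_pos) (auto simp: lessThan_empty_iff)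

lemma Pw_pos:
  assumes "0 < \<mu>" "\<mu> < 1" "0 < \<beta>" "\<beta> < 1" "1 \<le> M"
  shows "0 < Pw \<mu> \<beta> M \<Phi> r j"
  using W_pos[OF assms] sum_W_pos[OF assms] by (simp add: Pw_def)

lemma sum_Pw:
  assumes "0 < \<mu>" "\<mu> < 1" "0 < \<beta>" "\<beta> < 1" "1 \<le> M"
  shows "(\<Sum>j<M. Pw \<mu> \<beta> M \<Phi> r j) = 1"
  using sum_W_pos[OF assms, of \<Phi> r] by (simp add: Pw_def sum_divide_distrib[symmetric])

lemma Pw_0: "Pw \<mu> \<beta> M \<Phi> 0 j = 1 / M"
  by (simp add: Pw_def)

lemma Pw_Suc:
  fixes \<Phi> :: "nat \<Rightarrow> nat \<Rightarrow> bool" and r :: nat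
  assumes "0 < \<mu>" "\<mu> < 1" "0 < \<beta>" "\<beta> < 1" "1 \<le> M"
  defines "a \<equiv> \<lambda>k. ((1 - \<mu>) * Pw \<mu> \<beta> M \<Phi> r k + \<mu> / M) * (if \<Phi> (Suc r) k then \<beta> else 1 - \<beta>)"
  shows "Pw \<mu> \<beta> M \<Phi> (Suc r) j = a j / (\<Sum>k<M. a k)"
proof -
  define S where "S = (\<Sum>k<M. W \<mu> \<beta> M \<Phi> r k)"
  have S: "0 < S" using sum_W_pos[OF assms(1-5)] by (simp add: S_def)
  have "W \<mu> \<beta> M \<Phi> (Suc r) k = S * a k" for k
    using S by (simp add: a_def Pw_def S_def[symmetric] field_simps)
  then show ?thesis
    using S by (simp add: Pw_def sum_distrib_left[symmetric])
qed

definition error_const :: "nat \<Rightarrow> real \<Rightarrow> real \<Rightarrow> real \<Rightarrow> real" where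
  "error_const M \<epsilon> \<mu> \<beta> = 4 * real M * (2 * real M + 1) / (\<mu> * (1 - \<beta>)) * debias_scale \<epsilon>"

lemma error_const_nonneg:
  assumes "0 < \<epsilon>" "0 < \<mu>" "\<beta> < 1"
  shows "0 \<le> error_const M \<epsilon> \<mu> \<beta>"
  using debias_scale_ge_1[OF assms(1)] assms by (simp add: error_const_def)

section \<open>Analysis of the adoption process\<close>

text \<open>
  The parameter \<open>s\<close> stands for \<open>sqrt (ln N / g N)\<close>; the assumptions collect what
  \<open>N\<close> being large provides. The two tail assumptions make the Chernoff bounds used for the
  agents and for the random-walk tokens fail with probability at most \<open>N\<^sup>-\<^sup>1\<^sup>1\<close>.
\<close>

locale adoption_setting =
  fixes E :: "nat \<Rightarrow> nat \<Rightarrow> bool" and N L K M :: nat and \<epsilon> \<mu> \<beta> s :: real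
  assumes M_pos: "1 \<le> M" and eps_pos: "0 < \<epsilon>" and mu_pos: "0 < \<mu>" and mu_less_1: "\<mu> < 1"
    and beta_gt_half: "1/2 < \<beta>" and beta_less_1: "\<beta> < 1" and N_ge_3: "3 \<le> N"
    and walk_mixes: "good_walk_length E N L"
    and s_pos: "0 < s" and s_ge: "4 / (real N)\<^sup>2 \<le> s"
    and s_small: "5 * (error_const M \<epsilon> \<mu> \<beta> * s) \<le> 1"
    and agents_tail: "11 * ln N \<le> s\<^sup>2 * (N * (1 - \<beta>) / 2) / 4"
    and tokens_tail: "11 * ln N \<le> s\<^sup>2 * ((1 - \<beta>) / 2 * K) / 8"
begin

text \<open>
  Error budget of one round: \<open>est_err\<close> bounds the error of an agent's sampled frequencies
  against the perturbed means, \<open>qhat_err\<close> that of the debiased estimates, \<open>sel_err\<close> and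
  \<open>count_err\<close> are the resulting relative errors of the selection probabilities and of the
  adoption counts, and \<open>growth\<close> is the factor by which the ratio \<open>u / l\<close> of the invariant
  may grow per round.
\<close>

definition est_err :: real where
  "est_err = 5 * s + 4 / (real N)\<^sup>2"

definition qhat_err :: real where
  "qhat_err = 2 * (real M + 1) * (debias_scale \<epsilon> * est_err)"

definition sel_err :: real where
  "sel_err = qhat_err / (\<mu> / M)"

definition count_err :: real where
  "count_err = s / (\<mu> / M * (1 - \<beta>))"

definition growth :: real where
  "growth = (1 + sel_err) * (1 + count_err) / ((1 - sel_err) * (1 - count_err))"

lemma N_pos: "0 < real N"
  using N_ge_3 by simp

lemma mu_div_M_pos: "0 < \<mu> / M"
  using mu_pos M_pos by simp

lemma Pw_gt_0: "0 < Pw \<mu> \<beta> M \<Phi> r j"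
  using Pw_pos mu_pos mu_less_1 beta_gt_half beta_less_1 M_pos by simp

lemma sum_Pw_eq_1: "(\<Sum>j<M. Pw \<mu> \<beta> M \<Phi> r j) = 1"
  using sum_Pw mu_pos mu_less_1 beta_gt_half beta_less_1 M_pos by simp

lemma est_err_le: "est_err \<le> 6 * s"
  using s_ge by (simp add: est_err_def)

lemma sel_err_nonneg: "0 \<le> sel_err"
proof -
  have "0 \<le> est_err" using s_pos by (simp add: est_err_def)
  then have "0 \<le> qhat_err" using debias_scale_ge_1[OF eps_pos] by (simp add: qhat_err_def)
  then show ?thesis unfolding sel_err_def using mu_div_M_pos by (rule divide_nonneg_pos)
qed

lemma count_err_nonneg: "0 \<le> count_err"
  unfolding count_err_def using s_pos mu_div_M_pos beta_less_1 by (intro divide_nonneg_pos mult_pos_pos) auto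

lemma errs_le: "4 * (sel_err + count_err) \<le> 5 * (error_const M \<epsilon> \<mu> \<beta> * s)"
proof -
  define \<kappa> where "\<kappa> = debias_scale \<epsilon>"
  define k where "k = \<kappa> * s / (\<mu> * (1 - \<beta>))"
  have \<kappa>: "1 \<le> \<kappa>" using debias_scale_ge_1[OF eps_pos] by (simp add: \<kappa>_def)
  have q: "0 < \<mu> * (1 - \<beta>)" using mu_pos beta_less_1 by simp
  have k: "0 \<le> k" using \<kappa> s_pos q by (simp add: k_def)
  have "sel_err = 2 * ((real M + 1) * M) * \<kappa> * est_err * (1 / \<mu>)"
    using M_pos by (simp add: sel_err_def qhat_err_def \<kappa>_def field_simps)
  also have "\<dots> \<le> 2 * ((real M + 1) * M) * \<kappa> * (6 * s) * (1 / 2 / (\<mu> * (1 - \<beta>)))"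
  proof (rule mult_mono)
    show "2 * ((real M + 1) * M) * \<kappa> * est_err \<le> 2 * ((real M + 1) * M) * \<kappa> * (6 * s)"
      using est_err_le \<kappa> by (intro mult_left_mono) auto
    show "1 / \<mu> \<le> 1 / 2 / (\<mu> * (1 - \<beta>))"
      using mu_pos beta_gt_half beta_less_1 by (simp add: field_simps)
  qed (use \<kappa> s_pos mu_pos in auto)
  also have "\<dots> = 6 * ((real M + 1) * M) * k" by (simp add: k_def)
  finally have sel: "sel_err \<le> 6 * ((real M + 1) * M) * k" .
  have "count_err = M * (s / (\<mu> * (1 - \<beta>)))"
    using M_pos by (simp add: count_err_def field_simps)
  also have "\<dots> \<le> M * k"
    unfolding k_def using mult_right_mono[OF \<kappa>, of s] s_pos q
    by (intro mult_left_mono divide_right_mono) auto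
  finally have "4 * (sel_err + count_err) \<le> (24 * M * M + 28 * M) * k"
    using sel by (simp add: algebra_simps)
  also have "\<dots> \<le> (40 * M * M + 20 * M) * k"
    using M_pos k by (intro mult_right_mono) auto
  also have "\<dots> = 5 * (error_const M \<epsilon> \<mu> \<beta> * s)"
    by (simp add: error_const_def k_def \<kappa>_def field_simps)
  finally show ?thesis .
qed

lemma sel_err_le: "sel_err \<le> 1/4"
  using errs_le s_small count_err_nonneg by (simp add: distrib_left)

lemma count_err_le: "count_err \<le> 1/4"
  using errs_le s_small sel_err_nonneg by (simp add: distrib_left)

lemma s_le: "s \<le> 1/4"
proof -
  have "\<mu> * (1 - \<beta>) \<le> 1 * 1" using mu_pos mu_less_1 beta_less_1 beta_gt_half by (intro mult_mono) auto
  then have "1 \<le> M / (\<mu> * (1 - \<beta>))" using M_pos mu_pos beta_less_1 by (simp add: le_divide_eq)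
  then have "s * 1 \<le> s * (M / (\<mu> * (1 - \<beta>)))" using s_pos by (intro mult_left_mono) auto
  also have "\<dots> = count_err" using M_pos by (simp add: count_err_def field_simps)
  finally show ?thesis using count_err_le by simp
qed

lemma M_s_le: "M * s \<le> (1 - \<beta>) / 2"
proof -
  have "M * s = count_err * \<mu> * (1 - \<beta>)"
    using mu_pos M_pos beta_less_1 by (simp add: count_err_def field_simps)
  also have "\<dots> \<le> 1/4 * 1 * (1 - \<beta>)"
    using count_err_le count_err_nonneg mu_pos mu_less_1 beta_less_1
    by (intro mult_mono) auto
  finally show ?thesis using beta_less_1 by simp
qed

lemma qhat_err_small: "M * (debias_scale \<epsilon> * est_err) \<le> 1/2"
proof -
  define x where "x = M * (debias_scale \<epsilon> * est_err)"
  have x: "0 \<le> x" using s_pos debias_scale_ge_1[OF eps_pos] by (simp add: x_def est_err_def)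
  have "4 * x \<le> 2 * (real M + 1) * x" using M_pos x by (intro mult_right_mono) auto
  also have "\<dots> \<le> 2 * (real M + 1) * x / \<mu>"
    using x mu_pos mu_less_1 by (simp add: le_divide_eq mult_left_le)
  also have "\<dots> = sel_err" using M_pos by (simp add: x_def sel_err_def qhat_err_def field_simps)
  finally show ?thesis using sel_err_le by (simp add: x_def)
qed

lemma growth_pos: "0 < growth"
  using sel_err_nonneg sel_err_le count_err_nonneg count_err_le unfolding growth_def
  by (intro divide_pos_pos mult_pos_pos) auto

lemma growth_le: "growth \<le> 1 + 5 * (error_const M \<epsilon> \<mu> \<beta> * s)"
  using growth_factor_le[OF sel_err_nonneg sel_err_le count_err_nonneg count_err_le] errs_le
  unfolding growth_def by linarith

lemma agents_chernoff_le:
  assumes "N * (1 - \<beta>) / 2 \<le> m"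
  shows "2 * exp (- (s\<^sup>2 * m / 4)) \<le> 2 / real N ^ 11"
proof -
  have "s\<^sup>2 * (N * (1 - \<beta>) / 2) / 4 \<le> s\<^sup>2 * m / 4"
    using assms by (intro divide_right_mono mult_left_mono) auto
  then have "11 * ln N \<le> s\<^sup>2 * m / 4" using agents_tail by linarith
  then have "exp (- (s\<^sup>2 * m / 4)) \<le> 1 / real N ^ 11"
    using N_ge_3 by (intro exp_minus_le_inverse_power) auto
  then show ?thesis by simp
qed

lemma tokens_chernoff_le:
  assumes "(1 - \<beta>) / 2 * K \<le> \<nu>"
  shows "2 * exp (- ((s / 2)\<^sup>2 * (2 * \<nu>) / 4)) \<le> 2 / real N ^ 11"
proof -
  have "s\<^sup>2 * ((1 - \<beta>) / 2 * K) / 8 \<le> s\<^sup>2 * \<nu> / 8"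
    using assms by (intro divide_right_mono mult_left_mono) auto
  then have "11 * ln N \<le> s\<^sup>2 * \<nu> / 8" using tokens_tail by linarith
  then have "exp (- (s\<^sup>2 * \<nu> / 8)) \<le> 1 / real N ^ 11"
    using N_ge_3 by (intro exp_minus_le_inverse_power) auto
  moreover have "(s / 2)\<^sup>2 * (2 * \<nu>) / 4 = s\<^sup>2 * \<nu> / 8" by (simp add: power2_eq_square)
  ultimately show ?thesis by (simp only:)
qed

definition good_state :: "(nat \<Rightarrow> nat \<Rightarrow> bool) \<Rightarrow> nat \<Rightarrow> (nat \<Rightarrow> nat option) \<Rightarrow> bool" where
  "good_state \<Phi> r x \<longleftrightarrow>
     (\<forall>i j. x i = Some j \<longrightarrow> j < M) \<and> (r = 0 \<longrightarrow> x = (\<lambda>_. None)) \<and>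
     (0 < r \<longrightarrow> N * (1 - \<beta>) / 2 \<le> card (adopters N x)) \<and>
     (\<exists>l u. 0 < l \<and> u \<le> growth ^ r * l \<and> sandwiched M l u (Pw \<mu> \<beta> M \<Phi> r) (popularity N M r x))"

lemma good_state_0: "good_state \<Phi> 0 (\<lambda>_. None)"
  unfolding good_state_def sandwiched_def using growth_pos
  by (auto simp: popularity_def Pw_0 intro!: exI[of _ 1])

lemma card_adopters_pos:
  assumes "good_state \<Phi> r x" "0 < r"
  shows "0 < card (adopters N x)"
proof -
  have "0 < N * (1 - \<beta>) / 2" using N_pos beta_less_1 by simp
  then show ?thesis using assms by (auto simp: good_state_def)
qed

lemma sum_popularity_good:
  assumes "good_state \<Phi> r x"
  shows "(\<Sum>j<M. popularity N M r x j) = 1"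
proof (rule sum_popularity[OF _ M_pos])
  show "\<forall>i j. x i = Some j \<longrightarrow> j < M" using assms by (simp add: good_state_def)
  show "0 < card (adopters N x)" if "0 < r" using card_adopters_pos[OF assms that] .
qed

lemma good_state_sandwiched:
  assumes "good_state \<Phi> r x"
  obtains l u where "0 < l" "l \<le> 1" "1 \<le> u" "u \<le> growth ^ r * l"
    "sandwiched M l u (Pw \<mu> \<beta> M \<Phi> r) (popularity N M r x)"
proof -
  obtain l u where "0 < l" "u \<le> growth ^ r * l" and sw: "sandwiched M l u (Pw \<mu> \<beta> M \<Phi> r) (popularity N M r x)"
    using assms by (auto simp: good_state_def)
  moreover have "l \<le> 1" "1 \<le> u"
    using sandwiched_le_1_le[OF sw sum_Pw_eq_1 sum_popularity_good[OF assms]] by auto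
  ultimately show ?thesis using that by blast
qed

lemma approx_within_of_good_state:
  assumes "good_state \<Phi> r x" "j < M"
  shows "approx_within (1 + 5 ^ r * (error_const M \<epsilon> \<mu> \<beta> * s)) (Pw \<mu> \<beta> M \<Phi> r j) (popularity N M r x j)"
proof -
  obtain l u where lu: "0 < l" "l \<le> 1" "1 \<le> u" "u \<le> growth ^ r * l"
    and sw: "sandwiched M l u (Pw \<mu> \<beta> M \<Phi> r) (popularity N M r x)"
    using good_state_sandwiched[OF assms(1)] .
  have cs: "0 \<le> 5 * (error_const M \<epsilon> \<mu> \<beta> * s)" using error_const_nonneg[OF eps_pos mu_pos beta_less_1] s_pos by simp
  have "growth ^ r \<le> (1 + 5 * (error_const M \<epsilon> \<mu> \<beta> * s)) ^ r"
    using growth_pos growth_le by (intro power_mono) auto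
  also have "\<dots> \<le> 1 + 5 ^ r * (5 * (error_const M \<epsilon> \<mu> \<beta> * s)) / 5"
    using cs s_small by (intro one_plus_power_le) auto
  finally have "growth ^ r * l \<le> (1 + 5 ^ r * (error_const M \<epsilon> \<mu> \<beta> * s)) * l"
    using lu(1) by (intro mult_right_mono) auto
  then have "u \<le> (1 + 5 ^ r * (error_const M \<epsilon> \<mu> \<beta> * s)) * l"
    using lu(4) by linarith
  then show ?thesis
    using approx_within_of_sandwiched[OF sw lu(1-3)] assms(2) Pw_gt_0 by blast
qed

definition explore :: "(nat \<Rightarrow> real) \<Rightarrow> nat \<Rightarrow> real" where
  "explore P j = (1 - \<mu>) * P j + \<mu> / M"

definition adopt_weight :: "(nat \<Rightarrow> bool) \<Rightarrow> nat \<Rightarrow> real" where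
  "adopt_weight \<Phi>r j = (if \<Phi>r j then \<beta> else 1 - \<beta>)"

lemma adopt_weight_bounds: "1 - \<beta> \<le> adopt_weight \<Phi>r j" "0 \<le> adopt_weight \<Phi>r j"
  using beta_gt_half beta_less_1 by (auto simp: adopt_weight_def)

lemma explore_Qhat_ge: "\<mu> / M \<le> explore (Qhat \<epsilon> M \<Lambda>) j"
  using Qhat_nonneg[of \<epsilon> M \<Lambda> j] mu_less_1 by (simp add: explore_def)

lemma sum_explore_Qhat: "(\<Sum>j<M. explore (Qhat \<epsilon> M \<Lambda>) j) = 1"
  using sum_Qhat[OF M_pos] M_pos by (simp add: explore_def sum.distrib sum_distrib_left[symmetric])

lemma Pw_Suc_explore:
  "Pw \<mu> \<beta> M \<Phi> (Suc r) j = explore (Pw \<mu> \<beta> M \<Phi> r) j * adopt_weight (\<Phi> (Suc r)) j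
     / (\<Sum>k<M. explore (Pw \<mu> \<beta> M \<Phi> r) k * adopt_weight (\<Phi> (Suc r)) k)"
  using Pw_Suc[of \<mu> \<beta> M] mu_pos mu_less_1 beta_gt_half beta_less_1 M_pos
  by (simp add: explore_def adopt_weight_def)

lemma prob_adopt_explore:
  "j < M \<Longrightarrow> measure_pmf.prob (adopt_pmf \<epsilon> \<mu> \<beta> M \<Phi>r \<Lambda>) {v. v = Some j}
     = explore (Qhat \<epsilon> M \<Lambda>) j * adopt_weight \<Phi>r j"
  using prob_adopt_pmf_Some M_pos mu_pos mu_less_1 beta_gt_half beta_less_1
  by (simp add: explore_def adopt_weight_def)

lemma explore_sandwiched:
  assumes "\<forall>j<M. 0 \<le> Q j" "\<forall>j<M. \<bar>Qhat \<epsilon> M \<Lambda> j - Q j\<bar> \<le> qhat_err"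
  shows "sandwiched M (1 - sel_err) (1 + sel_err) (explore Q) (explore (Qhat \<epsilon> M \<Lambda>))"
proof (rule sandwiched_of_abs_diff_le)
  fix j assume "j < M"
  have "explore (Qhat \<epsilon> M \<Lambda>) j - explore Q j = (1 - \<mu>) * (Qhat \<epsilon> M \<Lambda> j - Q j)"
    by (simp add: explore_def algebra_simps)
  then have "\<bar>explore (Qhat \<epsilon> M \<Lambda>) j - explore Q j\<bar> = (1 - \<mu>) * \<bar>Qhat \<epsilon> M \<Lambda> j - Q j\<bar>"
    using mu_less_1 by (simp add: abs_mult)
  also have "\<dots> \<le> 1 * qhat_err"
    using assms(2) \<open>j < M\<close> mu_pos mu_less_1 by (intro mult_mono) auto
  also have "\<dots> = sel_err * (\<mu> / M)"
    using M_pos mu_pos by (simp add: sel_err_def)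
  also have "\<dots> \<le> sel_err * explore Q j"
    using sel_err_nonneg assms(1) \<open>j < M\<close> mu_less_1 by (intro mult_left_mono) (auto simp: explore_def)
  finally show "\<bar>explore (Qhat \<epsilon> M \<Lambda>) j - explore Q j\<bar> \<le> sel_err * explore Q j" .
qed

lemma counts_sandwiched:
  assumes "\<forall>j<M. real N * (\<mu> / M) * (1 - \<beta>) \<le> m j" "\<forall>j<M. \<bar>X j - m j\<bar> \<le> s * N"
  shows "sandwiched M (1 - count_err) (1 + count_err) m X"
proof (rule sandwiched_of_abs_diff_le)
  fix j assume "j < M"
  have "s * N = count_err * (real N * (\<mu> / M) * (1 - \<beta>))"
    using M_pos mu_pos beta_less_1 by (simp add: count_err_def field_simps)
  also have "\<dots> \<le> count_err * m j"
    using count_err_nonneg assms(1) \<open>j < M\<close> by (intro mult_left_mono) auto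
  finally show "\<bar>X j - m j\<bar> \<le> count_err * m j"
    using assms(2) \<open>j < M\<close> by fastforce
qed

lemma sum_counts_ge:
  assumes "N * (1 - \<beta>) \<le> (\<Sum>j<M. m j)" "\<forall>j<M. \<bar>X j - m j\<bar> \<le> s * N"
  shows "N * (1 - \<beta>) / 2 \<le> (\<Sum>j<M. X j)"
proof -
  have "(\<Sum>j<M. m j - s * N) \<le> (\<Sum>j<M. X j)"
    using assms(2) by (intro sum_mono) (auto simp: abs_le_iff)
  moreover have "(\<Sum>j<M. m j - s * N) = (\<Sum>j<M. m j) - M * s * N"
    by (simp add: sum_subtractf)
  moreover have "M * s * N \<le> N * ((1 - \<beta>) / 2)"
    using mult_left_mono[OF M_s_le, of N] by (simp add: mult_ac)
  ultimately show ?thesis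
    using assms(1) by linarith
qed

lemma expected_adoptions_ge:
  fixes \<Lambda>s :: "nat \<Rightarrow> nat \<Rightarrow> real" and \<Phi>r :: "nat \<Rightarrow> bool"
  defines "m \<equiv> \<lambda>j. (\<Sum>i<N. explore (Qhat \<epsilon> M (\<Lambda>s i)) j) * adopt_weight \<Phi>r j"
  shows "real N * (\<mu> / M) * (1 - \<beta>) \<le> m j" and "N * (1 - \<beta>) \<le> (\<Sum>j<M. m j)"
proof -
  have "(\<Sum>i<N. \<mu> / M) * (1 - \<beta>) \<le> m j"
    unfolding m_def using explore_Qhat_ge adopt_weight_bounds mu_div_M_pos beta_less_1
    by (intro mult_mono sum_mono sum_nonneg) (auto intro: order.trans[OF less_imp_le[OF mu_div_M_pos]])
  then show "real N * (\<mu> / M) * (1 - \<beta>) \<le> m j" by simp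
  have "(\<Sum>i<N. \<Sum>j<M. explore (Qhat \<epsilon> M (\<Lambda>s i)) j * (1 - \<beta>)) \<le> (\<Sum>i<N. \<Sum>j<M. explore (Qhat \<epsilon> M (\<Lambda>s i)) j * adopt_weight \<Phi>r j)"
    using adopt_weight_bounds explore_Qhat_ge mu_div_M_pos
    by (intro sum_mono mult_left_mono) (auto intro: order.trans[OF less_imp_le[OF mu_div_M_pos]])
  also have "\<dots> = (\<Sum>j<M. m j)"
    unfolding m_def sum_distrib_right by (rule sum.swap)
  finally show "N * (1 - \<beta>) \<le> (\<Sum>j<M. m j)"
    by (simp add: sum_distrib_right[symmetric] sum_explore_Qhat)
qed

lemma expected_adoptions_sandwiched:
  assumes "sandwiched M l u (Pw \<mu> \<beta> M \<Phi> r) Q" "l \<le> 1" "1 \<le> u" "\<forall>j<M. 0 \<le> Q j"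
    and "\<forall>i<N. \<forall>j<M. \<bar>Qhat \<epsilon> M (\<Lambda>s i) j - Q j\<bar> \<le> qhat_err"
  shows "sandwiched M ((1 - sel_err) * l * N) ((1 + sel_err) * u * N)
           (\<lambda>j. explore (Pw \<mu> \<beta> M \<Phi> r) j * adopt_weight \<Phi>r j)
           (\<lambda>j. (\<Sum>i<N. explore (Qhat \<epsilon> M (\<Lambda>s i)) j) * adopt_weight \<Phi>r j)"
proof -
  have "sandwiched M ((1 - sel_err) * l) ((1 + sel_err) * u)
      (explore (Pw \<mu> \<beta> M \<Phi> r)) (explore (Qhat \<epsilon> M (\<Lambda>s i)))" if "i < N" for i
  proof (rule sandwiched_trans)
    show "sandwiched M l u (explore (Pw \<mu> \<beta> M \<Phi> r)) (explore Q)"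
      unfolding explore_def[abs_def]
      using assms(1-3) mu_less_1 mu_div_M_pos by (intro sandwiched_mix) auto
    show "sandwiched M (1 - sel_err) (1 + sel_err) (explore Q) (explore (Qhat \<epsilon> M (\<Lambda>s i)))"
      using assms(4,5) that by (intro explore_sandwiched) auto
  qed (use sel_err_le sel_err_nonneg in auto)
  then have "sandwiched M ((1 - sel_err) * l * card {..<N}) ((1 + sel_err) * u * card {..<N})
      (explore (Pw \<mu> \<beta> M \<Phi> r)) (\<lambda>j. \<Sum>i\<in>{..<N}. explore (Qhat \<epsilon> M (\<Lambda>s i)) j)"
    by (intro sandwiched_sum) auto
  then show ?thesis
    by (intro sandwiched_mult) (auto simp: adopt_weight_bounds)
qed

lemma growth_step:
  assumes "u \<le> growth ^ r * l" "0 \<le> c"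
  shows "(1 + count_err) * ((1 + sel_err) * u * c)
    \<le> growth ^ Suc r * ((1 - count_err) * ((1 - sel_err) * l * c))"
proof -
  have "(1 - sel_err) * (1 - count_err) \<noteq> 0" using sel_err_le count_err_le by simp
  then have g: "(1 + count_err) * (1 + sel_err) = growth * ((1 - count_err) * (1 - sel_err))"
    unfolding growth_def by (simp add: mult.commute)
  have "(1 + count_err) * ((1 + sel_err) * u * c) = (1 + count_err) * (1 + sel_err) * c * u"
    by (simp add: mult_ac)
  also have "\<dots> \<le> (1 + count_err) * (1 + sel_err) * c * (growth ^ r * l)"
    using assms sel_err_nonneg count_err_nonneg by (intro mult_left_mono) auto
  also have "\<dots> = growth ^ Suc r * ((1 - count_err) * ((1 - sel_err) * l * c))"
    unfolding g by (simp add: mult_ac)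
  finally show ?thesis .
qed

lemma card_adopters_ge_of_concentrated:
  fixes \<Lambda>s :: "nat \<Rightarrow> nat \<Rightarrow> real" and y :: "nat \<Rightarrow> nat option"
  assumes y: "\<forall>i j. y i = Some j \<longrightarrow> j < M"
    and concentrated: "\<forall>j<M. \<bar>card {i. i < N \<and> y i = Some j}
        - (\<Sum>i<N. explore (Qhat \<epsilon> M (\<Lambda>s i)) j) * adopt_weight \<Phi>r j\<bar> \<le> s * N"
  shows "N * (1 - \<beta>) / 2 \<le> card (adopters N y)"
proof -
  have "card (adopters N y) = (\<Sum>j<M. real (card {i. i < N \<and> y i = Some j}))"
    using card_adopters_eq_sum[OF y] by simp
  then show ?thesis
    using sum_counts_ge[OF expected_adoptions_ge(2) concentrated] by simp
qed

lemma sum_explore_weight_pos: "0 < (\<Sum>k<M. explore (Pw \<mu> \<beta> M \<Phi> r) k * adopt_weight \<Phi>r k)"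
proof -
  have "0 < explore (Pw \<mu> \<beta> M \<Phi> r) k" for k
    unfolding explore_def using Pw_gt_0[of \<Phi> r k] mu_less_1 mu_div_M_pos
    by (intro add_nonneg_pos mult_nonneg_nonneg) auto
  then have "0 < explore (Pw \<mu> \<beta> M \<Phi> r) k * adopt_weight \<Phi>r k" for k
    using adopt_weight_bounds(1)[of \<Phi>r k] beta_less_1 by (intro mult_pos_pos) auto
  then show ?thesis using M_pos by (intro sum_pos) (auto simp: lessThan_empty_iff)
qed

lemma good_state_Suc:
  fixes \<Lambda>s :: "nat \<Rightarrow> nat \<Rightarrow> real" and y :: "nat \<Rightarrow> nat option"
  assumes x: "good_state \<Phi> r x"
    and accurate: "\<forall>i<N. \<forall>j<M. \<bar>Qhat \<epsilon> M (\<Lambda>s i) j - popularity N M r x j\<bar> \<le> qhat_err"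
    and y: "\<forall>i j. y i = Some j \<longrightarrow> j < M"
    and concentrated: "\<forall>j<M. \<bar>card {i. i < N \<and> y i = Some j}
        - (\<Sum>i<N. explore (Qhat \<epsilon> M (\<Lambda>s i)) j) * adopt_weight (\<Phi> (Suc r)) j\<bar> \<le> s * N"
  shows "good_state \<Phi> (Suc r) y"
proof -
  let ?w = "adopt_weight (\<Phi> (Suc r))"
  define m where "m j = (\<Sum>i<N. explore (Qhat \<epsilon> M (\<Lambda>s i)) j) * ?w j" for j
  define X where "X j = real (card {i. i < N \<and> y i = Some j})" for j
  define Z where "Z = (\<Sum>k<M. explore (Pw \<mu> \<beta> M \<Phi> r) k * ?w k)"
  define D where "D = real (card (adopters N y))"
  obtain l u where lu: "0 < l" "l \<le> 1" "1 \<le> u" "u \<le> growth ^ r * l"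
    and sw: "sandwiched M l u (Pw \<mu> \<beta> M \<Phi> r) (popularity N M r x)"
    using good_state_sandwiched[OF x] .
  have D: "N * (1 - \<beta>) / 2 \<le> D"
    unfolding D_def by (rule card_adopters_ge_of_concentrated[OF y concentrated])
  moreover have "0 < N * (1 - \<beta>) / 2" using N_pos beta_less_1 by simp
  ultimately have D_pos: "0 < D" by linarith
  have Z_pos: "0 < Z" unfolding Z_def by (rule sum_explore_weight_pos)
  have "sandwiched M ((1 - count_err) * ((1 - sel_err) * l * N)) ((1 + count_err) * ((1 + sel_err) * u * N))
      (\<lambda>j. explore (Pw \<mu> \<beta> M \<Phi> r) j * ?w j) X"
  proof (rule sandwiched_trans)
    show "sandwiched M ((1 - sel_err) * l * N) ((1 + sel_err) * u * N) (\<lambda>j. explore (Pw \<mu> \<beta> M \<Phi> r) j * ?w j) m"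
      unfolding m_def[abs_def] using accurate popularity_nonneg
      by (intro expected_adoptions_sandwiched[OF sw lu(2,3)]) auto
    show "sandwiched M (1 - count_err) (1 + count_err) m X"
      using expected_adoptions_ge(1) concentrated by (intro counts_sandwiched) (auto simp: m_def X_def)
  qed (use count_err_le count_err_nonneg in auto)
  from sandwiched_divide[OF this Z_pos D_pos]
  have "sandwiched M ((1 - count_err) * ((1 - sel_err) * l * N) * Z / D) ((1 + count_err) * ((1 + sel_err) * u * N) * Z / D)
      (Pw \<mu> \<beta> M \<Phi> (Suc r)) (popularity N M (Suc r) y)"
    by (simp add: Pw_Suc_explore[abs_def] Z_def popularity_def[abs_def] X_def D_def adopters_def)
  moreover have "(1 + count_err) * ((1 + sel_err) * u * N) * Z / D
      \<le> growth ^ Suc r * ((1 - count_err) * ((1 - sel_err) * l * N) * Z / D)"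
    using mult_right_mono[OF growth_step[OF lu(4), of N] less_imp_le[OF Z_pos]] D_pos
    by (simp add: divide_right_mono mult.assoc)
  moreover have "0 < (1 - count_err) * ((1 - sel_err) * l * N) * Z / D"
    using sel_err_le count_err_le lu(1) N_pos Z_pos D_pos by simp
  ultimately show ?thesis
    unfolding good_state_def using y D D_def by blast
qed

lemma adoption_good_whp:
  fixes \<Lambda>s :: "nat \<Rightarrow> nat \<Rightarrow> real"
  assumes x: "good_state \<Phi> r x"
    and accurate: "\<forall>i<N. \<forall>j<M. \<bar>Qhat \<epsilon> M (\<Lambda>s i) j - popularity N M r x j\<bar> \<le> qhat_err"
  shows "measure_pmf.prob (Pi_pmf {..<N} None (\<lambda>i. adopt_pmf \<epsilon> \<mu> \<beta> M (\<Phi> (Suc r)) (\<Lambda>s i)))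
           {y. \<not> good_state \<Phi> (Suc r) y} \<le> M * (2 / real N ^ 11)"
proof -
  let ?P = "Pi_pmf {..<N} None (\<lambda>i. adopt_pmf \<epsilon> \<mu> \<beta> M (\<Phi> (Suc r)) (\<Lambda>s i))"
  define m where "m j = (\<Sum>i\<in>{..<N}. measure_pmf.prob (adopt_pmf \<epsilon> \<mu> \<beta> M (\<Phi> (Suc r)) (\<Lambda>s i)) {v. v = Some j})" for j
  define B where "B j = {y. s * N < \<bar>real (card {i\<in>{..<N}. y i = Some j}) - m j\<bar>}" for j
  have "measure_pmf.prob ?P {y. \<not> good_state \<Phi> (Suc r) y} \<le> card {..<M} * (2 / real N ^ 11)"
  proof (rule prob_le_card_mult)
    fix y assume y: "y \<in> set_pmf ?P" "y \<in> {y. \<not> good_state \<Phi> (Suc r) y}"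
    have "m j = (\<Sum>i<N. explore (Qhat \<epsilon> M (\<Lambda>s i)) j) * adopt_weight (\<Phi> (Suc r)) j" if "j < M" for j
      unfolding m_def using prob_adopt_explore[OF that] by (simp add: sum_distrib_right)
    then show "\<exists>j\<in>{..<M}. y \<in> B j"
      using y good_state_Suc[OF x accurate set_pmf_Pi_adopt_pmf[OF M_pos _ _ y(1)]] mu_pos mu_less_1
      by (force simp: B_def not_less)
  next
    fix j
    have "m j \<le> (\<Sum>i\<in>{..<N}. 1)" unfolding m_def by (intro sum_mono) auto
    then have "measure_pmf.prob ?P (B j) \<le> 2 * exp (- (s\<^sup>2 * N / 4))"
      unfolding B_def using s_pos s_le
      by (intro chernoff_card_Pi_pmf[where f="\<lambda>i v. v = Some j", OF _ m_def]) auto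
    also have "\<dots> \<le> 2 / real N ^ 11"
      using beta_gt_half N_pos by (intro agents_chernoff_le) simp
    finally show "measure_pmf.prob ?P (B j) \<le> 2 / real N ^ 11" .
  qed simp
  then show ?thesis by simp
qed

definition perturbed_mean :: "(nat \<Rightarrow> nat option) \<Rightarrow> nat \<Rightarrow> real" where
  "perturbed_mean x j = (\<Sum>a\<in>adopters N x. measure_pmf.prob (perturb_pmf \<epsilon> M x a) {v. v j})"

definition perturbation_ok :: "(nat \<Rightarrow> nat option) \<Rightarrow> (nat \<Rightarrow> nat \<Rightarrow> bool) \<Rightarrow> bool" where
  "perturbation_ok x pv \<longleftrightarrow>
     (\<forall>j<M. \<bar>real (card {a\<in>adopters N x. pv a j}) - perturbed_mean x j\<bar> \<le> s * card (adopters N x))"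

lemma perturbed_mean_debias:
  assumes "good_state \<Phi> r x" "0 < r" "j < M"
  shows "debias_scale \<epsilon> * (perturbed_mean x j / card (adopters N x)) - 1 / (exp (\<epsilon>/2) - 1)
    = popularity N M r x j"
proof -
  define D where "D = real (card (adopters N x))"
  define q where "q = popularity N M r x j"
  have D: "0 < D" using card_adopters_pos[OF assms(1,2)] by (simp add: D_def)
  have "{a\<in>adopters N x. x a = Some j} = {i. i < N \<and> x i = Some j}" by (auto simp: adopters_def)
  then have Dq: "real (card {a\<in>adopters N x. x a = Some j}) = q * D"
    using assms(2) D by (simp add: q_def D_def popularity_def adopters_def)
  have "perturbed_mean x j = keep_prob \<epsilon> * (q * D) + (1 - keep_prob \<epsilon>) * (D - q * D)"
    unfolding perturbed_mean_def prob_perturb_pmf[OF assms(3)] sum_if_eq_card[OF finite_adopters]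
    using Dq by (simp add: D_def)
  then have "perturbed_mean x j / D = keep_prob \<epsilon> * q + (1 - keep_prob \<epsilon>) * (1 - q)"
    using D by (simp add: field_simps)
  then show ?thesis
    using debias_keep_prob[OF eps_pos] by (simp add: D_def q_def)
qed

lemma perturbation_ok_whp:
  assumes "good_state \<Phi> r x"
  shows "measure_pmf.prob (Pi_pmf (adopters N x) (\<lambda>_. False) (perturb_pmf \<epsilon> M x))
    {pv. \<not> (0 < r \<longrightarrow> perturbation_ok x pv)} \<le> M * (2 / real N ^ 11)"
proof (cases "0 < r")
  case True
  let ?P = "Pi_pmf (adopters N x) (\<lambda>_. False) (perturb_pmf \<epsilon> M x)"
  define D where "D = real (card (adopters N x))"
  define B where "B j = {pv. s * D < \<bar>real (card {a\<in>adopters N x. pv a j}) - perturbed_mean x j\<bar>}" for j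
  have "measure_pmf.prob ?P {pv. \<not> (0 < r \<longrightarrow> perturbation_ok x pv)} \<le> card {..<M} * (2 / real N ^ 11)"
  proof (rule prob_le_card_mult)
    show "\<exists>j\<in>{..<M}. pv \<in> B j" if "pv \<in> {pv. \<not> (0 < r \<longrightarrow> perturbation_ok x pv)}" for pv
      using that by (auto simp: perturbation_ok_def B_def D_def not_le)
  next
    fix j
    have "perturbed_mean x j \<le> (\<Sum>a\<in>adopters N x. 1)"
      unfolding perturbed_mean_def by (intro sum_mono) auto
    then have "measure_pmf.prob ?P (B j) \<le> 2 * exp (- (s\<^sup>2 * D / 4))"
      unfolding B_def using s_pos s_le finite_adopters
      by (intro chernoff_card_Pi_pmf[where f="\<lambda>a v. v j", OF _ perturbed_mean_def]) (auto simp: D_def)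
    also have "\<dots> \<le> 2 / real N ^ 11"
      using assms True by (intro agents_chernoff_le) (simp add: good_state_def D_def)
    finally show "measure_pmf.prob ?P (B j) \<le> 2 / real N ^ 11" .
  qed (simp add: finite_adopters)
  then show ?thesis by simp
qed simp

definition tokens :: "(nat \<Rightarrow> nat option) \<Rightarrow> (nat \<times> nat) set" where
  "tokens x = adopters N x \<times> {..<K}"

definition walks_pmf :: "(nat \<Rightarrow> nat option) \<Rightarrow> (nat \<times> nat \<Rightarrow> nat) pmf" where
  "walks_pmf x = Pi_pmf (tokens x) 0 (\<lambda>t. mh_walk E N L (fst t))"

definition mean_tokens :: "(nat \<Rightarrow> nat option) \<Rightarrow> real" where
  "mean_tokens x = real (card (adopters N x)) * K / N"

definition count_close :: "(nat \<Rightarrow> nat option) \<Rightarrow> (nat \<times> nat \<Rightarrow> nat) \<Rightarrow> nat \<Rightarrow> nat set \<Rightarrow> bool" where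
  "count_close x ends i B \<longleftrightarrow>
     \<bar>card {t\<in>tokens x. ends t = i \<and> fst t \<in> B} - real (card B) * K / N\<bar>
       \<le> s * mean_tokens x + mean_tokens x / (real N)\<^sup>2"

definition accurate :: "nat \<Rightarrow> (nat \<Rightarrow> nat option) \<Rightarrow> (nat \<Rightarrow> nat \<Rightarrow> bool) \<Rightarrow> (nat \<times> nat \<Rightarrow> nat) \<Rightarrow> bool" where
  "accurate r x pv ends \<longleftrightarrow>
     (\<forall>i<N. \<forall>j<M. \<bar>Qhat \<epsilon> M (Lambda (adopters N x) K pv ends i) j - popularity N M r x j\<bar> \<le> qhat_err)"

lemma K_pos: "0 < K"
proof (rule ccontr)
  assume "\<not> 0 < K"
  then have "11 * ln N \<le> 0" using tokens_tail by simp
  moreover have "0 < ln N" using N_ge_3 by simp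
  ultimately show False by simp
qed

lemma mean_tokens_ge:
  assumes "good_state \<Phi> r x" "0 < r"
  shows "(1 - \<beta>) / 2 * K \<le> mean_tokens x"
proof -
  have "N * (1 - \<beta>) / 2 \<le> card (adopters N x)"
    using assms by (simp add: good_state_def)
  then have "N * (1 - \<beta>) / 2 * K \<le> real (card (adopters N x)) * K"
    by (rule mult_right_mono) simp
  then have "N * (1 - \<beta>) / 2 * K / N \<le> mean_tokens x"
    unfolding mean_tokens_def by (rule divide_right_mono) simp
  then show ?thesis using N_pos by simp
qed

lemma walk_mass_close:
  assumes "finite U" "\<forall>t\<in>U. fst t < N" "i < N"
  shows "\<bar>(\<Sum>t\<in>U. pmf (mh_walk E N L (fst t)) i) - card U / N\<bar> \<le> card U / N ^ 3"
proof -
  have "\<bar>pmf (mh_walk E N L (fst t)) i - 1 / N\<bar> \<le> 1 / N ^ 3" if "t \<in> U" for t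
    using walk_mixes[unfolded good_walk_length_def, rule_format, of "fst t" i] assms(2,3) that
    by (simp add: abs_le_iff)
  then have "\<bar>\<Sum>t\<in>U. pmf (mh_walk E N L (fst t)) i - 1 / N\<bar> \<le> (\<Sum>t\<in>U. 1 / N ^ 3)"
    by (intro order.trans[OF sum_abs] sum_mono) auto
  then show ?thesis by (simp add: sum_subtractf)
qed

lemma expected_token_count_close:
  assumes "B \<subseteq> adopters N x" "i < N"
  shows "\<bar>(\<Sum>t\<in>tokens x. measure_pmf.prob (mh_walk E N L (fst t)) {v. v = i \<and> fst t \<in> B})
      - real (card B) * K / N\<bar> \<le> mean_tokens x / (real N)\<^sup>2"
proof -
  have fin: "finite (tokens x)" by (simp add: tokens_def finite_adopters)
  have "(\<Sum>t\<in>tokens x. measure_pmf.prob (mh_walk E N L (fst t)) {v. v = i \<and> fst t \<in> B})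
      = (\<Sum>t\<in>tokens x. if fst t \<in> B then pmf (mh_walk E N L (fst t)) i else 0)"
    by (intro sum.cong) (auto simp: measure_pmf_single)
  also have "\<dots> = (\<Sum>t\<in>{t\<in>tokens x. fst t \<in> B}. pmf (mh_walk E N L (fst t)) i)"
    using fin by (rule sum.inter_filter[symmetric])
  also have "{t\<in>tokens x. fst t \<in> B} = B \<times> {..<K}"
    using assms(1) by (auto simp: tokens_def)
  finally have "\<bar>(\<Sum>t\<in>tokens x. measure_pmf.prob (mh_walk E N L (fst t)) {v. v = i \<and> fst t \<in> B})
      - real (card B) * K / N\<bar> \<le> real (card B) * K / N ^ 3"
    using walk_mass_close[of "B \<times> {..<K}" i] finite_subset[OF assms(1) finite_adopters] assms
    by (auto simp: card_cartesian_product adopters_def)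
  also have "\<dots> \<le> real (card (adopters N x)) * K / N ^ 3"
    using card_mono[OF finite_adopters assms(1)] by (simp add: divide_right_mono mult_right_mono)
  also have "\<dots> = mean_tokens x / (real N)\<^sup>2"
    using N_pos by (simp add: mean_tokens_def power2_eq_square power3_eq_cube field_simps)
  finally show ?thesis .
qed

lemma token_count_whp:
  assumes x: "good_state \<Phi> r x" "0 < r" and "B \<subseteq> adopters N x" "i < N"
  shows "measure_pmf.prob (walks_pmf x) {ends. \<not> count_close x ends i B} \<le> 2 / real N ^ 11"
proof -
  define \<nu> where "\<nu> = mean_tokens x"
  define Q where "Q = (\<Sum>t\<in>tokens x. measure_pmf.prob (mh_walk E N L (fst t)) {v. v = i \<and> fst t \<in> B})"
  have close: "\<bar>Q - real (card B) * K / N\<bar> \<le> \<nu> / (real N)\<^sup>2"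
    unfolding Q_def \<nu>_def using assms(3,4) by (rule expected_token_count_close)
  have "real (card B) * K / N \<le> \<nu>"
    using card_mono[OF finite_adopters assms(3)] unfolding \<nu>_def mean_tokens_def
    by (simp add: divide_right_mono mult_right_mono)
  moreover have "\<nu> / (real N)\<^sup>2 \<le> \<nu> / 1"
    using N_ge_3 by (intro divide_left_mono) (auto simp: \<nu>_def mean_tokens_def)
  ultimately have Q_le: "Q \<le> 2 * \<nu>" using close by (simp add: abs_le_iff)
  have "measure_pmf.prob (walks_pmf x) {ends. \<not> count_close x ends i B}
    \<le> measure_pmf.prob (walks_pmf x) {ends. s / 2 * (2 * \<nu>) < \<bar>card {t\<in>tokens x. ends t = i \<and> fst t \<in> B} - Q\<bar>}"
    using abs_diff_gt_of_close[OF close]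
    by (intro measure_pmf.finite_measure_mono) (auto simp: count_close_def \<nu>_def not_le)
  also have "\<dots> \<le> 2 * exp (- ((s / 2)\<^sup>2 * (2 * \<nu>) / 4))"
    unfolding walks_pmf_def using s_pos s_le
    by (intro chernoff_card_Pi_pmf[where f="\<lambda>t v. v = i \<and> fst t \<in> B", OF _ Q_def Q_le])
      (auto simp: tokens_def finite_adopters)
  also have "\<dots> \<le> 2 / real N ^ 11"
    unfolding \<nu>_def by (rule tokens_chernoff_le[OF mean_tokens_ge[OF x]])
  finally show ?thesis .
qed

lemma Lambda_close:
  assumes x: "good_state \<Phi> r x" "0 < r" and pv: "perturbation_ok x pv" and "j < M"
    and n: "count_close x ends i (adopters N x)" and m: "count_close x ends i {a\<in>adopters N x. pv a j}"
  shows "\<bar>Lambda (adopters N x) K pv ends i j - perturbed_mean x j / card (adopters N x)\<bar> \<le> est_err"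
proof -
  define \<nu> where "\<nu> = mean_tokens x"
  define D where "D = real (card (adopters N x))"
  define q where "q = real (card {a\<in>adopters N x. pv a j}) / D"
  define e where "e = s + 1 / (real N)\<^sup>2"
  have D: "0 < D" using card_adopters_pos[OF x] by (simp add: D_def)
  have \<nu>: "0 < \<nu>" using D K_pos N_pos by (simp add: \<nu>_def mean_tokens_def D_def)
  have q: "0 \<le> q" "q \<le> 1"
    using D card_mono[OF finite_adopters, of "{a\<in>adopters N x. pv a j}"] by (auto simp: q_def D_def)
  have e: "e \<le> 1/2" using s_le s_ge by (simp add: e_def)
  have e\<nu>: "s * \<nu> + \<nu> / (real N)\<^sup>2 = e * \<nu>" by (simp add: e_def algebra_simps)
  have "{t\<in>tokens x. ends t = i \<and> fst t \<in> adopters N x} = {t\<in>adopters N x \<times> {..<K}. ends t = i}"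
    by (auto simp: tokens_def)
  then have n': "\<bar>card {t\<in>adopters N x \<times> {..<K}. ends t = i} - \<nu>\<bar> \<le> e * \<nu>"
    using n unfolding count_close_def \<nu>_def[symmetric] e\<nu> by (simp add: \<nu>_def mean_tokens_def)
  have "{t\<in>tokens x. ends t = i \<and> fst t \<in> {a\<in>adopters N x. pv a j}}
      = {t\<in>adopters N x \<times> {..<K}. ends t = i \<and> pv (fst t) j}"
    by (auto simp: tokens_def)
  moreover have "real (card {a\<in>adopters N x. pv a j}) * K / N = q * \<nu>"
    using D by (simp add: q_def \<nu>_def mean_tokens_def D_def)
  ultimately have m': "\<bar>card {t\<in>adopters N x \<times> {..<K}. ends t = i \<and> pv (fst t) j} - q * \<nu>\<bar> \<le> e * \<nu>"
    using m unfolding count_close_def \<nu>_def[symmetric] e\<nu> by simp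
  have "\<bar>Lambda (adopters N x) K pv ends i j - q\<bar> \<le> 2 * (e + e)"
    unfolding Lambda_def by (rule abs_divide_diff_le[OF \<nu> q n' m' e])
  moreover have "\<bar>real (card {a\<in>adopters N x. pv a j}) - perturbed_mean x j\<bar> \<le> s * D"
    using pv \<open>j < M\<close> by (simp add: perturbation_ok_def D_def)
  then have "\<bar>q - perturbed_mean x j / D\<bar> \<le> s"
    using D by (simp add: q_def diff_divide_distrib[symmetric] divide_le_eq)
  moreover have "2 * (e + e) = 4 * s + 4 / (real N)\<^sup>2" by (simp add: e_def)
  ultimately show ?thesis unfolding est_err_def D_def by linarith
qed

lemma accurate_of_Lambda_close:
  assumes "good_state \<Phi> r x" "0 < r"
    and "\<forall>i<N. \<forall>j<M. \<bar>Lambda (adopters N x) K pv ends i j - perturbed_mean x j / card (adopters N x)\<bar> \<le> est_err"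
  shows "accurate r x pv ends"
  unfolding accurate_def qhat_err_def
proof (intro allI impI)
  fix i j assume "i < N" "j < M"
  then show "\<bar>Qhat \<epsilon> M (Lambda (adopters N x) K pv ends i) j - popularity N M r x j\<bar>
    \<le> 2 * (real M + 1) * (debias_scale \<epsilon> * est_err)"
    using assms popularity_nonneg sum_popularity_good perturbed_mean_debias qhat_err_small
    by (intro abs_Qhat_diff_le[OF eps_pos, where a="\<lambda>j. perturbed_mean x j / card (adopters N x)"]) auto
qed

lemma accurate_0: "accurate 0 (\<lambda>_. None) pv ends"
proof -
  have "qhat_err \<ge> 0"
    using s_pos debias_scale_ge_1[OF eps_pos] by (simp add: qhat_err_def est_err_def)
  \<comment> \<open>Without adopters every \<open>Lambda\<close> is \<open>0 / 0 = 0\<close>, so \<open>Qhat\<close> is uniform, like the popularity in round 0.\<close>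
  moreover have "Lambda {} K pv ends i = (\<lambda>_. 0)" for i
    by (rule ext) (simp add: Lambda_def)
  ultimately show ?thesis
    by (simp add: accurate_def adopters_def Qhat_zero[OF eps_pos] popularity_def)
qed

lemma walks_accurate_whp:
  assumes x: "good_state \<Phi> r x" and pv: "0 < r \<longrightarrow> perturbation_ok x pv"
  shows "measure_pmf.prob (walks_pmf x) {ends. \<not> accurate r x pv ends} \<le> N * M * (4 / real N ^ 11)"
proof (cases "0 < r")
  case False
  then show ?thesis using x accurate_0 by (simp add: good_state_def)
next
  case True
  define bad where "bad ij = {ends. \<not> count_close x ends (fst ij) (adopters N x)}
      \<union> {ends. \<not> count_close x ends (fst ij) {a\<in>adopters N x. pv a (snd ij)}}" for ij
  have good: "accurate r x pv ends" if "\<forall>ij\<in>{..<N} \<times> {..<M}. ends \<notin> bad ij" for ends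
    using that pv True Lambda_close[OF x True]
    by (intro accurate_of_Lambda_close[OF x True]) (auto simp: bad_def)
  have bound: "measure_pmf.prob (walks_pmf x) (bad ij) \<le> 2 / real N ^ 11 + 2 / real N ^ 11"
    if "ij \<in> {..<N} \<times> {..<M}" for ij
    unfolding bad_def using that x True
    by (intro order.trans[OF measure_Un_le] add_mono token_count_whp) auto
  have "measure_pmf.prob (walks_pmf x) {ends. \<not> accurate r x pv ends}
      \<le> card ({..<N} \<times> {..<M}) * (2 / real N ^ 11 + 2 / real N ^ 11)"
  proof (rule prob_le_card_mult[where B=bad])
    show "\<exists>ij\<in>{..<N} \<times> {..<M}. ends \<in> bad ij" if "ends \<in> {ends. \<not> accurate r x pv ends}" for ends
      using that good by blast
  qed (use bound in auto)
  then show ?thesis by simp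
qed

definition round_failure :: real where
  "round_failure = (4 * real N * real M + 4 * real M) / real N ^ 11"

lemma round_step_good_whp:
  assumes x: "good_state \<Phi> r x"
  shows "measure_pmf.prob (round_step E N L K M \<epsilon> \<mu> \<beta> (\<Phi> (Suc r)) x) {y. \<not> good_state \<Phi> (Suc r) y}
    \<le> round_failure"
proof -
  have round: "round_step E N L K M \<epsilon> \<mu> \<beta> (\<Phi> (Suc r)) x =
      bind_pmf (Pi_pmf (adopters N x) (\<lambda>_. False) (perturb_pmf \<epsilon> M x)) (\<lambda>pv.
      bind_pmf (walks_pmf x) (\<lambda>ends.
      Pi_pmf {..<N} None (\<lambda>i. adopt_pmf \<epsilon> \<mu> \<beta> M (\<Phi> (Suc r)) (Lambda (adopters N x) K pv ends i))))"
    by (simp only: round_step_def Let_def adopters_def[symmetric] tokens_def[symmetric] walks_pmf_def[symmetric])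
  have "measure_pmf.prob (round_step E N L K M \<epsilon> \<mu> \<beta> (\<Phi> (Suc r)) x) {y. \<not> good_state \<Phi> (Suc r) y}
      \<le> M * (2 / real N ^ 11) + (N * M * (4 / real N ^ 11) + M * (2 / real N ^ 11))"
    unfolding round
  proof (rule prob_bind_pmf_le[OF perturbation_ok_whp[OF x]])
    fix pv assume "pv \<notin> {pv. \<not> (0 < r \<longrightarrow> perturbation_ok x pv)}"
    then have pv: "0 < r \<longrightarrow> perturbation_ok x pv" by blast
    show "measure_pmf.prob (bind_pmf (walks_pmf x) (\<lambda>ends.
        Pi_pmf {..<N} None (\<lambda>i. adopt_pmf \<epsilon> \<mu> \<beta> M (\<Phi> (Suc r)) (Lambda (adopters N x) K pv ends i))))
        {y. \<not> good_state \<Phi> (Suc r) y} \<le> N * M * (4 / real N ^ 11) + M * (2 / real N ^ 11)"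
    proof (rule prob_bind_pmf_le[OF walks_accurate_whp[OF x pv]])
      fix ends assume "ends \<notin> {ends. \<not> accurate r x pv ends}"
      then show "measure_pmf.prob (Pi_pmf {..<N} None (\<lambda>i. adopt_pmf \<epsilon> \<mu> \<beta> M (\<Phi> (Suc r))
          (Lambda (adopters N x) K pv ends i))) {y. \<not> good_state \<Phi> (Suc r) y} \<le> M * (2 / real N ^ 11)"
        by (intro adoption_good_whp[OF x]) (simp add: accurate_def)
    qed simp
  qed simp
  also have "\<dots> = round_failure"
    using N_pos by (simp add: round_failure_def field_simps)
  finally show ?thesis .
qed

lemma adoption_proc_good_whp:
  "measure_pmf.prob (adoption_proc E N L K M \<epsilon> \<mu> \<beta> \<Phi> r) {x. \<not> good_state \<Phi> r x}
    \<le> r * round_failure"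
proof (induction r)
  case 0
  then show ?case using good_state_0 by simp
next
  case (Suc r)
  have "measure_pmf.prob (adoption_proc E N L K M \<epsilon> \<mu> \<beta> \<Phi> (Suc r)) {x. \<not> good_state \<Phi> (Suc r) x}
      \<le> r * round_failure + round_failure"
    unfolding adoption_proc.simps
  proof (rule prob_bind_pmf_le[OF Suc.IH])
    fix x assume "x \<notin> {x. \<not> good_state \<Phi> r x}"
    then show "measure_pmf.prob (round_step E N L K M \<epsilon> \<mu> \<beta> (\<Phi> (Suc r)) x) {x. \<not> good_state \<Phi> (Suc r) x}
        \<le> round_failure"
      by (intro round_step_good_whp) simp
  qed (simp add: round_failure_def)
  also have "\<dots> = real (Suc r) * round_failure"
    by (simp only: of_nat_Suc distrib_right mult_1_left add.commute)
  finally show ?case .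
qed

lemma failure_bound_le:
  "r * round_failure \<le> real ((10 * M + 3) * r) / real N ^ 10"
proof -
  have "4 * real M \<le> 4 * real M * real N"
    using mult_left_mono[of 1 "real N" "4 * real M"] N_ge_3 by simp
  moreover have "(10 * real M + 3) * real N = 4 * real M * real N + (6 * real M * real N + 3 * real N)"
    by (simp add: algebra_simps)
  moreover have "4 * real N * M = 4 * real M * real N" by simp
  moreover have "0 \<le> 6 * real M * real N + 3 * real N" by simp
  ultimately have "4 * real N * real M + 4 * real M \<le> (10 * real M + 3) * real N"
    by linarith
  then have "(4 * real N * real M + 4 * real M) / real N ^ 11 \<le> (10 * real M + 3) * real N / real N ^ 11"
    by (simp add: divide_right_mono)
  also have "\<dots> = (10 * real M + 3) / real N ^ 10"
    using N_pos by (simp add: power_eq_if)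
  finally have "r * ((4 * real N * real M + 4 * real M) / real N ^ 11) \<le> r * ((10 * real M + 3) / real N ^ 10)"
    by (rule mult_left_mono) simp
  also have "\<dots> = real ((10 * M + 3) * r) / real N ^ 10"
    by simp
  finally show ?thesis unfolding round_failure_def .
qed

theorem prob_approx_within_ge:
  assumes "j < M"
  shows "1 - real ((10 * M + 3) * r) / real N ^ 10
    \<le> measure_pmf.prob (adoption_proc E N L K M \<epsilon> \<mu> \<beta> \<Phi> r)
        {x. approx_within (1 + 5 ^ r * (error_const M \<epsilon> \<mu> \<beta> * s)) (Pw \<mu> \<beta> M \<Phi> r j) (popularity N M r x j)}"
  using approx_within_of_good_state[OF _ assms] order.trans[OF adoption_proc_good_whp failure_bound_le]
  by (rule prob_ge_1_minus_of_compl_le)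

end

section \<open>Choice of the parameters\<close>

lemma four_div_square_le_sqrt_ln_div:
  fixes G :: real
  assumes "3 \<le> N" "0 < G" "G \<le> N"
  shows "4 / (real N)\<^sup>2 \<le> sqrt (ln N / G)"
proof (rule real_le_rsqrt)
  have "16 \<le> real N ^ 3" using power_mono[of 3 "real N" 3] assms(1) by simp
  then have "16 / real N ^ 3 * (1 / N) \<le> 1 * (1 / N)"
    using assms(1) by (intro mult_right_mono) auto
  moreover have "(4 / (real N)\<^sup>2)\<^sup>2 = 16 / real N ^ 3 * (1 / N)"
    by (simp add: power_divide power2_eq_square power3_eq_cube)
  ultimately have "(4 / (real N)\<^sup>2)\<^sup>2 \<le> 1 / N" by simp
  also have "\<dots> \<le> 1 / G" using assms(2,3) by (simp add: frac_le)
  also have "\<dots> \<le> ln N / G" using ln_ge_1[OF assms(1)] assms(2) by (intro divide_right_mono) auto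
  finally show "(4 / (real N)\<^sup>2)\<^sup>2 \<le> ln N / G" .
qed

lemma adoption_setting_sqrt_ln:
  fixes G :: real
  assumes "1 \<le> M" "0 < \<epsilon>" "0 < \<mu>" "\<mu> < 1" "1/2 < \<beta>" "\<beta> < 1" "11 \<le> \<sigma>" "3 \<le> N"
    and "good_walk_length E N L" and "0 < G"
    and small: "25 * (error_const M \<epsilon> \<mu> \<beta>)\<^sup>2 * ln N \<le> G" and large: "88 * G \<le> (1 - \<beta>) * N"
  shows "adoption_setting E N L (nat \<lceil>16 * \<sigma> / (1 - \<beta>) * G\<rceil>) M \<epsilon> \<mu> \<beta> (sqrt (ln N / G))"
proof -
  define s where "s = sqrt (ln N / G)"
  define K where "K = nat \<lceil>16 * \<sigma> / (1 - \<beta>) * G\<rceil>"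
  have lnN: "1 \<le> ln N" using ln_ge_1 assms(8) by simp
  have s2: "s\<^sup>2 = ln N / G" using lnN \<open>0 < G\<close> by (simp add: s_def)
  have "(1 - \<beta>) * N \<le> 1 * real N" using assms(5,6) by (intro mult_right_mono) auto
  then have "4 / (real N)\<^sup>2 \<le> s"
    using four_div_square_le_sqrt_ln_div[OF assms(8,10)] large by (simp add: s_def)
  moreover have "5 * (error_const M \<epsilon> \<mu> \<beta> * s) = sqrt (25 * (error_const M \<epsilon> \<mu> \<beta>)\<^sup>2 * ln N / G)"
    using error_const_nonneg[OF assms(2,3,6)] by (simp add: s_def real_sqrt_mult real_sqrt_divide)
  then have "5 * (error_const M \<epsilon> \<mu> \<beta> * s) \<le> 1" using small \<open>0 < G\<close> by simp
  moreover have "11 * ln N \<le> s\<^sup>2 * (N * (1 - \<beta>) / 2) / 4"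
  proof -
    have "11 \<le> (1 - \<beta>) * N / (8 * G)" using large \<open>0 < G\<close> by (simp add: field_simps)
    then have "ln N * 11 \<le> ln N * ((1 - \<beta>) * N / (8 * G))" using lnN by (intro mult_left_mono) auto
    moreover have "s\<^sup>2 * (N * (1 - \<beta>) / 2) / 4 = ln N * ((1 - \<beta>) * N / (8 * G))"
      unfolding s2 by (simp add: field_simps)
    ultimately show ?thesis by (simp add: mult.commute)
  qed
  moreover have "11 * ln N \<le> s\<^sup>2 * ((1 - \<beta>) / 2 * K) / 8"
  proof -
    have "16 * \<sigma> / (1 - \<beta>) * G \<le> K" unfolding K_def by linarith
    then have "ln N / G * ((1 - \<beta>) / 2 * (16 * \<sigma> / (1 - \<beta>) * G)) / 8 \<le> s\<^sup>2 * ((1 - \<beta>) / 2 * K) / 8"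
      using assms(6) lnN \<open>0 < G\<close> unfolding s2 by (intro divide_right_mono mult_left_mono) auto
    moreover have "ln N / G * ((1 - \<beta>) / 2 * (16 * \<sigma> / (1 - \<beta>) * G)) / 8 = \<sigma> * ln N"
      using assms(6) \<open>0 < G\<close> by (simp add: field_simps)
    moreover have "11 * ln N \<le> \<sigma> * ln N" using assms(7) lnN by (intro mult_right_mono) auto
    ultimately show ?thesis by linarith
  qed
  moreover have "0 < s" using lnN \<open>0 < G\<close> by (simp add: s_def)
  ultimately show ?thesis
    using assms unfolding s_def K_def by unfold_locales auto
qed

lemma eventually_adoption_setting:
  assumes "1 \<le> M" "0 < \<epsilon>" "0 < \<mu>" "\<mu> < 1" "1/2 < \<beta>" "\<beta> < 1" "11 \<le> \<sigma>"
    and g: "\<forall>l>0. \<forall>\<^sub>F n in sequentially. l * ln (real n) < g n \<and> g n < l * real n"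
  shows "\<forall>\<^sub>F N in sequentially. \<forall>E L. good_walk_length E N L \<longrightarrow>
    adoption_setting E N L (nat \<lceil>16 * \<sigma> / (1 - \<beta>) * g N\<rceil>) M \<epsilon> \<mu> \<beta> (sqrt (ln N / g N))"
proof -
  define c where "c = error_const M \<epsilon> \<mu> \<beta>"
  \<comment> \<open>These rates give \<open>5 c s \<le> 1\<close> and \<open>11 ln N \<le> s\<^sup>2 N (1 - \<beta>) / 8\<close> for \<open>s = sqrt (ln N / g N)\<close>.\<close>
  have "0 < 25 * c\<^sup>2 + 1" "0 < (1 - \<beta>) / 88"
    using assms(6) by (auto intro: add_nonneg_pos)
  from this[THEN g[rule_format]]
  have "\<forall>\<^sub>F N in sequentially. (25 * c\<^sup>2 + 1) * ln N < g N"
    "\<forall>\<^sub>F N in sequentially. g N < (1 - \<beta>) / 88 * N"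
    by (auto elim: eventually_mono)
  then have "\<forall>\<^sub>F N in sequentially. (25 * c\<^sup>2 + 1) * ln N < g N \<and> g N < (1 - \<beta>) / 88 * N \<and> 3 \<le> N"
    by (intro eventually_conj eventually_ge_at_top)
  then show ?thesis
  proof (rule eventually_mono, intro allI impI)
    fix N E L
    assume N: "(25 * c\<^sup>2 + 1) * ln N < g N \<and> g N < (1 - \<beta>) / 88 * N \<and> 3 \<le> N"
      and walk: "good_walk_length E N L"
    have "1 \<le> ln N" using ln_ge_1 N by simp
    moreover have "0 \<le> 25 * c\<^sup>2 * ln N" using \<open>1 \<le> ln N\<close> by simp
    moreover have "(25 * c\<^sup>2 + 1) * ln N = 25 * c\<^sup>2 * ln N + ln N" by (simp add: algebra_simps)
    ultimately have "0 < g N" "25 * c\<^sup>2 * ln N \<le> g N" using N by linarith+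
    moreover have "88 * g N \<le> (1 - \<beta>) * N" using N by simp
    ultimately show "adoption_setting E N L (nat \<lceil>16 * \<sigma> / (1 - \<beta>) * g N\<rceil>) M \<epsilon> \<mu> \<beta> (sqrt (ln N / g N))"
      using assms(1-7) N walk by (intro adoption_setting_sqrt_ln) (auto simp: c_def)
  qed
qed

theorem lemma11:
  fixes M :: nat and \<epsilon> \<mu> \<beta> \<sigma> :: real and g :: "nat \<Rightarrow> real"
  assumes "M \<ge> 1" and "\<epsilon> > 0" and "0 < \<mu>" and "\<mu> < 1" and "1/2 < \<beta>" and "\<beta> < 1"
    and "\<sigma> \<ge> 11"
    and "\<forall>l>0. \<forall>\<^sub>F n in sequentially. l * ln (real n) < g n \<and> g n < l * real n"
  shows "\<exists>N0. \<forall>N\<ge>N0. \<forall>E L. good_graph E N \<and> good_walk_length E N L \<longrightarrow>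
     (\<forall>\<Phi> j r. j < M \<longrightarrow>
        (let h = 16 * \<sigma> / (1 - \<beta>);
             K = nat \<lceil>h * g N\<rceil>;
             c = 4 * real M * (2 * real M + 1) / (\<mu> * (1 - \<beta>))
                 * ((exp (\<epsilon>/2) + 1) / (exp (\<epsilon>/2) - 1));
             \<delta>Q = c * sqrt (ln (real N) / g N);
             \<delta>r = 5 ^ r * \<delta>Q
         in measure_pmf.prob (adoption_proc E N L K M \<epsilon> \<mu> \<beta> \<Phi> r)
              {x. approx_within (1 + \<delta>r) (Pw \<mu> \<beta> M \<Phi> r j) (popularity N M r x j)}
            \<ge> 1 - real ((10 * M + 3) * r) / real N ^ 10))"
proof -
  obtain N0 where N0: "\<And>N E L. N0 \<le> N \<Longrightarrow> good_walk_length E N L \<Longrightarrow>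
      adoption_setting E N L (nat \<lceil>16 * \<sigma> / (1 - \<beta>) * g N\<rceil>) M \<epsilon> \<mu> \<beta> (sqrt (ln N / g N))"
    using eventually_adoption_setting[OF assms] by (auto simp: eventually_sequentially)
  show ?thesis
    unfolding Let_def
    using adoption_setting.prob_approx_within_ge[OF N0, unfolded error_const_def debias_scale_def]
    by blast
qed

end
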